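(* For any integer $n>1$, and for any 0-cell $\{\lambda_{i,j}:s_js_i \to s_is_j\}_{0\leq i< j \leq n}$ of $\mathsf{Wdl}^{(n)}(\overline{\mathcal K})$, consider the idempotent 2-cell $$ \overleftarrow{\lambda}_{0,1,\dots,n}:= s_0s_1\dots s_{n-1}\mu_n \,.\, (\text{the unique composite of } \lambda_{i,j}\text{s } s_ns_0s_1\dots s_n\to s_0s_1\dots s_{n-1}s_n^2) \,.\, \eta_ns_0s_1\dots s_n : s_0s_1\dots s_n\to s_0s_1\dots s_n $$ in $\mathcal K$ and $$ \overline\lambda_{01\dots n}:= \overleftarrow \lambda_{0,1,\dots,n}. \overleftarrow \lambda_{0,1,\dots,n-1}s_n.\ \cdots\ . \overleftarrow \lambda_{0,1,2}s_3s_4\dots s_n. \overline \lambda_{01}s_2s_3\dots s_n\ . $$ This construction associates the same idempotent 2-cell to any 0-cell $\{\lambda_{i,j}:s_js_i \to s_is_j\}_{0\leq i< j \leq n}$ of $\mathsf{Wdl}^{(n)}(\overline{\mathcal K})$ and to its image under any of the 2-functors $C_k:\mathsf{Wdl}^{(n)}(\overline{\mathcal K})\to \mathsf{Wdl}^{(n-1)}(\overline{\mathcal K})$, $1\leq k\leq n$. That is, for all $1\leq k\leq n$, $\overline\lambda_{01\dots n}= \overline\lambda_{01\dots k-2(k-1,k)k+1\dots n}$, where the right hand side is the same construction applied to the $n$ monads $s_0,\dots,s_{k-2},(s_{k-1}s_k,\overline\lambda_{k-1,k}),s_{k+1},\dots,s_n$ and the weak distributive laws of the image under $C_k$.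
   Context: $\mathcal K$ is a 2-category and $\overline{\mathcal K}$ its local idempotent closure: same 0-cells, 1-cells are pairs $(v,\overline v)$ with $\overline v:v\to v$ an idempotent 2-cell of $\mathcal K$, and 2-cells $(v,\overline v)\to(v',\overline{v'})$ are 2-cells $\omega:v\to v'$ with $\overline{v'}.\omega=\omega=\omega.\overline v$. A weak distributive law between monads $t,s$ on the same object is a 2-cell $\lambda:ts\to st$ compatible with both multiplications and satisfying the weak unit condition $s\mu.\lambda t.\eta st=\mu t.s\lambda.st\eta=:\overline\lambda$ (an idempotent; $\overline\lambda_{ij}$ denotes this idempotent for $\lambda_{i,j}$). A 0-cell of $\mathsf{Wdl}^{(n)}(\overline{\mathcal K})$ is a family of $n+1$ monads $s_0,\dots,s_n$ in $\overline{\mathcal K}$ on a common object, with multiplications $\mu_i$ and units $\eta_i$, together with weak distributive laws $\lambda_{i,j}:s_js_i\to s_is_j$ for $0\le i<j\le n$ satisfying the Yang-Baxter relation $\lambda_{i,j}s_k.s_j\lambda_{i,k}.\lambda_{j,k}s_i=s_i\lambda_{j,k}.\lambda_{i,k}s_j.s_k\lambda_{i,j}$ for $i<j<k$. The 2-functor $C_k$ sends such a 0-cell to the $n$ monads $s_0,\dots,s_{k-2},(s_{k-1}s_k,\overline\lambda_{k-1,k}),s_{k+1},\dots,s_n$ (the middle one being the weak wreath product monad with multiplication $\mu_{k-1}\mu_k.s_{k-1}\lambda_{k-1,k}s_k$ and unit $\lambda_{k-1,k}.\eta_k\eta_{k-1}$) with weak distributive laws: $\lambda_{i,j}$ if $i,j\notin\{k-1,k\}$;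 $s_{k-1}\lambda_{k,j}.\lambda_{k-1,j}s_k.s_j\overline\lambda_{k-1,k}:s_j(s_{k-1}s_k)\to(s_{k-1}s_k)s_j$ if $k<j$; and $\lambda_{i,k-1}s_k.s_{k-1}\lambda_{i,k}.\overline\lambda_{k-1,k}s_i:(s_{k-1}s_k)s_i\to s_i(s_{k-1}s_k)$ if $i<k-1$. *)

theory Defs
  imports Main
begin

text \<open>
  All monads in the statement live on one common 0-cell A of the 2-category K, so
  everything happens in the hom-category K(A,A), which is a strict monoidal category
  (horizontal composition = tensor).  Conversely every strict monoidal category is
  K(A,A) for a one-object 2-category.  We therefore model the relevant part of K as a
  strict monoidal category: 1-cells of type 'o, 2-cells of type 'm.
\<close>

record ('o,'m) smcat =
  cdom  :: "'m \<Rightarrow> 'o"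
  ccod  :: "'m \<Rightarrow> 'o"
  cid   :: "'o \<Rightarrow> 'm"
  ccomp :: "'m \<Rightarrow> 'm \<Rightarrow> 'm"   (* vertical composition, ccomp f g = f . g (g first) *)
  otens :: "'o \<Rightarrow> 'o \<Rightarrow> 'o"
  mtens :: "'m \<Rightarrow> 'm \<Rightarrow> 'm"
  cunit :: "'o"

locale smc_ops =
  fixes C :: "('o,'m) smcat"
begin

abbreviation Dom where "Dom \<equiv> cdom C"
abbreviation Cod where "Cod \<equiv> ccod C"
abbreviation Id where "Id \<equiv> cid C"
abbreviation V where "V \<equiv> ccomp C"
abbreviation OT where "OT \<equiv> otens C"
abbreviation H where "H \<equiv> mtens C"
abbreviation U where "U \<equiv> cunit C"

definition hom :: "'m \<Rightarrow> 'o \<Rightarrow> 'o \<Rightarrow> bool" where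
  "hom f a b \<longleftrightarrow> Dom f = a \<and> Cod f = b"

definition ob :: "'o list \<Rightarrow> 'o" where
  "ob xs = foldr OT xs U"

definition idl :: "'o list \<Rightarrow> 'm" where
  "idl xs = Id (ob xs)"

text \<open>A monad in the local idempotent closure: 1-cell (s, sb), multiplication mu, unit eta.
  Identity 2-cell of (s,sb) is sb; whiskering by (s,sb) is horizontal composition with sb.\<close>
definition is_monad :: "'o \<Rightarrow> 'm \<Rightarrow> 'm \<Rightarrow> 'm \<Rightarrow> bool" where
  "is_monad s sb mu eta \<longleftrightarrow>
     hom sb s s \<and> V sb sb = sb \<and>
     hom mu (OT s s) s \<and> V sb mu = mu \<and> V mu (H sb sb) = mu \<and>
     hom eta U s \<and> V sb eta = eta \<and>
     V mu (H mu sb) = V mu (H sb mu) \<and>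
     V mu (H eta sb) = sb \<and> V mu (H sb eta) = sb"

text \<open>A weak distributive law lam : t s \<rightarrow> s t in the local idempotent closure between monads
  t = (st, sbt, mut, etat) and s = (ss, sbs, mus, etas).\<close>
definition is_wdl :: "'o \<Rightarrow> 'm \<Rightarrow> 'm \<Rightarrow> 'm \<Rightarrow> 'o \<Rightarrow> 'm \<Rightarrow> 'm \<Rightarrow> 'm \<Rightarrow> 'm \<Rightarrow> bool" where
  "is_wdl st sbt mut etat ss sbs mus etas lam \<longleftrightarrow>
     hom lam (OT st ss) (OT ss st) \<and>
     V (H sbs sbt) lam = lam \<and> V lam (H sbt sbs) = lam \<and>
     V lam (H mut sbs) = V (H sbs mut) (V (H lam sbt) (H sbt lam)) \<and>
     V lam (H sbt mus) = V (H mus sbt) (V (H sbs lam) (H lam sbs)) \<and>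
     V (H sbs mut) (V (H lam sbt) (H etat (H sbs sbt))) =
     V (H mus sbt) (V (H sbs lam) (H sbs (H sbt etas)))"

definition wdl0 :: "nat \<Rightarrow> (nat \<Rightarrow> 'o) \<Rightarrow> (nat \<Rightarrow> 'm) \<Rightarrow> (nat \<Rightarrow> 'm) \<Rightarrow> (nat \<Rightarrow> 'm)
                   \<Rightarrow> (nat \<Rightarrow> nat \<Rightarrow> 'm) \<Rightarrow> bool" where
  "wdl0 n S Sb M E L \<longleftrightarrow>
     (\<forall>i\<le>n. is_monad (S i) (Sb i) (M i) (E i)) \<and>
     (\<forall>i j. i < j \<and> j \<le> n \<longrightarrow>
        is_wdl (S j) (Sb j) (M j) (E j) (S i) (Sb i) (M i) (E i) (L i j)) \<and>
     (\<forall>i j k. i < j \<and> j < k \<and> k \<le> n \<longrightarrow>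
        V (H (L i j) (Sb k)) (V (H (Sb j) (L i k)) (H (L j k) (Sb i))) =
        V (H (Sb i) (L j k)) (V (H (L i k) (Sb j)) (H (Sb k) (L i j))))"

definition wu :: "(nat \<Rightarrow> 'o) \<Rightarrow> (nat \<Rightarrow> 'm) \<Rightarrow> (nat \<Rightarrow> 'm) \<Rightarrow> (nat \<Rightarrow> nat \<Rightarrow> 'm)
                   \<Rightarrow> nat \<Rightarrow> nat \<Rightarrow> 'm" where
  "wu S M E L i j = V (H (Id (S i)) (M j)) (V (H (L i j) (Id (S j))) (H (E j) (H (Id (S i)) (Id (S j)))))"

text \<open>The composite of the L i m moving S m past S 0 ... S (m-1):
  after i steps, S m S_0..S_{m-1} \<rightarrow> S_0..S_{i-1} S_m S_i..S_{m-1}.\<close>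
definition mvstep :: "(nat \<Rightarrow> 'o) \<Rightarrow> (nat \<Rightarrow> nat \<Rightarrow> 'm) \<Rightarrow> nat \<Rightarrow> nat \<Rightarrow> 'm" where
  "mvstep S L m i = H (idl (map S [0..<i])) (H (L i m) (idl (map S [Suc i..<m])))"

fun mv :: "(nat \<Rightarrow> 'o) \<Rightarrow> (nat \<Rightarrow> nat \<Rightarrow> 'm) \<Rightarrow> nat \<Rightarrow> nat \<Rightarrow> 'm" where
  "mv S L m 0 = idl (S m # map S [0..<m])"
| "mv S L m (Suc i) = V (mvstep S L m i) (mv S L m i)"

definition larrow :: "(nat \<Rightarrow> 'o) \<Rightarrow> (nat \<Rightarrow> 'm) \<Rightarrow> (nat \<Rightarrow> 'm) \<Rightarrow> (nat \<Rightarrow> nat \<Rightarrow> 'm)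
                       \<Rightarrow> nat \<Rightarrow> 'm" where
  "larrow S M E L m =
     V (H (idl (map S [0..<m])) (M m))
       (V (H (mv S L m m) (Id (S m)))
          (H (E m) (idl (map S [0..<Suc m]))))"

text \<open>lambda-bar_{01...m} = larrow_{0..m} . larrow_{0..m-1} S_m . ... . larrow_{0,1} S_2..S_m
  (note larrow_{0,1} is the weak unit idempotent of L 0 1).\<close>
fun wbar :: "(nat \<Rightarrow> 'o) \<Rightarrow> (nat \<Rightarrow> 'm) \<Rightarrow> (nat \<Rightarrow> 'm) \<Rightarrow> (nat \<Rightarrow> nat \<Rightarrow> 'm) \<Rightarrow> nat \<Rightarrow> 'm" where
  "wbar S M E L 0 = Id (S 0)"
| "wbar S M E L (Suc m) = V (larrow S M E L (Suc m)) (H (wbar S M E L m) (Id (S (Suc m))))"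

text \<open>Image under the 2-functor C_k (1 \<le> k \<le> n): merge monads k-1 and k.\<close>
definition CS :: "nat \<Rightarrow> (nat \<Rightarrow> 'o) \<Rightarrow> nat \<Rightarrow> 'o" where
  "CS k S i = (if i < k - 1 then S i else if i = k - 1 then OT (S (k - 1)) (S k) else S (Suc i))"

definition CM :: "nat \<Rightarrow> (nat \<Rightarrow> 'o) \<Rightarrow> (nat \<Rightarrow> 'm) \<Rightarrow> (nat \<Rightarrow> nat \<Rightarrow> 'm) \<Rightarrow> nat \<Rightarrow> 'm" where
  "CM k S M L i = (if i < k - 1 then M i
      else if i = k - 1 then V (H (M (k - 1)) (M k)) (H (Id (S (k - 1))) (H (L (k - 1) k) (Id (S k))))
      else M (Suc i))"

definition CE :: "nat \<Rightarrow> (nat \<Rightarrow> 'm) \<Rightarrow> (nat \<Rightarrow> nat \<Rightarrow> 'm) \<Rightarrow> nat \<Rightarrow> 'm" where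
  "CE k E L i = (if i < k - 1 then E i
      else if i = k - 1 then V (L (k - 1) k) (H (E k) (E (k - 1)))
      else E (Suc i))"

definition CL :: "nat \<Rightarrow> (nat \<Rightarrow> 'o) \<Rightarrow> (nat \<Rightarrow> 'm) \<Rightarrow> (nat \<Rightarrow> 'm) \<Rightarrow> (nat \<Rightarrow> nat \<Rightarrow> 'm)
                   \<Rightarrow> nat \<Rightarrow> nat \<Rightarrow> 'm" where
  "CL k S M E L i j =
     (if j < k - 1 then L i j
      else if j = k - 1 then
        V (H (L i (k - 1)) (Id (S k)))
          (V (H (Id (S (k - 1))) (L i k)) (H (wu S M E L (k - 1) k) (Id (S i))))
      else if i < k - 1 then L i (Suc j)
      else if i = k - 1 then
        V (H (Id (S (k - 1))) (L k (Suc j)))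
          (V (H (L (k - 1) (Suc j)) (Id (S k))) (H (Id (S (Suc j))) (wu S M E L (k - 1) k)))
      else L (Suc i) (Suc j))"

end

locale smc = smc_ops +
  assumes dom_id: "Dom (Id a) = a" and cod_id: "Cod (Id a) = a"
    and dom_comp: "Cod g = Dom f \<Longrightarrow> Dom (V f g) = Dom g"
    and cod_comp: "Cod g = Dom f \<Longrightarrow> Cod (V f g) = Cod f"
    and comp_id_right: "V f (Id (Dom f)) = f"
    and comp_id_left: "V (Id (Cod f)) f = f"
    and comp_assoc: "Cod h = Dom g \<Longrightarrow> Cod g = Dom f \<Longrightarrow> V (V f g) h = V f (V g h)"
    and dom_tens: "Dom (H f g) = OT (Dom f) (Dom g)"
    and cod_tens: "Cod (H f g) = OT (Cod f) (Cod g)"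
    and tens_id: "H (Id a) (Id b) = Id (OT a b)"
    and interchange: "Cod g = Dom f \<Longrightarrow> Cod k = Dom h \<Longrightarrow> H (V f g) (V h k) = V (H f h) (H g k)"
    and otens_assoc: "OT (OT a b) c = OT a (OT b c)"
    and otens_unit_left: "OT U a = a" and otens_unit_right: "OT a U = a"
    and mtens_assoc: "H (H f g) h = H f (H g h)"
    and mtens_unit_left: "H (Id U) f = f" and mtens_unit_right: "H f (Id U) = f"

end

theory Submission
  imports Defs
begin

text \<open>
  Let k = a + 1 and write lbar_in for the idempotent of the law between s_a and s_(a+1),
  whiskered into the word s_0 ... s_m. In the image under C_k the left arrow at every level
  above the merged monad is the original left arrow one level higher, precomposed with lbar_in
  (the merged laws contain the idempotent by construction), while the left arrow at the merged
  level is the product of the original left arrows at levels k and k - 1, by the compatibility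
  of the laws with the multiplications and Yang-Baxter. The extra idempotents are harmless:
  lbar_in absorbs the law it comes from, slides through the crossings by Yang-Baxter and hence
  through every left arrow, and it is absorbed by the partial composite for s_0 ... s_m as soon
  as m \<ge> k. Induction on the number of monads identifies the two composites.
\<close>

lemma upt_split1: "a < j \<Longrightarrow> [0..<j] = [0..<a] @ a # [Suc a..<j]"
  using upt_add_eq_append[of 0 a "j - a"] upt_conv_Cons[of a j] by simp

lemma upt_split2: "Suc a < j \<Longrightarrow> [0..<j] = [0..<a] @ a # Suc a # [Suc (Suc a)..<j]"
  using upt_split1[of a j] upt_conv_Cons[of "Suc a" j] by simp

section \<open>Whiskering in a strict monoidal category\<close>

context smc begin

lemma ob_simps [simp]: "ob [] = U" "ob (x # xs) = OT x (ob xs)" "ob (xs @ ys) = OT (ob xs) (ob ys)"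
  by (simp_all add: ob_def otens_unit_left otens_assoc)
    (induct xs, simp_all add: otens_unit_left otens_assoc)

lemma ob_map_upt_Suc: "ob (map S [0..<Suc m]) = OT (ob (map S [0..<m])) (S m)"
  by (simp add: otens_unit_right)

lemma ob_map_cong:
  "(\<And>x. x \<in> set xs \<Longrightarrow> f x = g x) \<Longrightarrow> ob (map f xs) = ob (map g xs)"
  by (metis map_cong)

lemma comp_id_right' [simp]: "Dom f = a \<Longrightarrow> V f (Id a) = f"
  using comp_id_right by blast

lemma comp_id_left' [simp]: "Cod f = a \<Longrightarrow> V (Id a) f = f"
  using comp_id_left by blast

lemma comp_tens:
  "Cod h = Dom f \<Longrightarrow> Cod k = Dom g \<Longrightarrow> V (H f g) (H h k) = H (V f h) (V g k)"
  using interchange by simp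

definition whisk :: "'a \<Rightarrow> 'b \<Rightarrow> 'a \<Rightarrow> 'b" where
  "whisk A f B = H (Id A) (H f (Id B))"

lemma whisk_dom [simp]: "Dom (whisk A f B) = OT A (OT (Dom f) B)"
  and whisk_cod [simp]: "Cod (whisk A f B) = OT A (OT (Cod f) B)"
  by (simp_all add: whisk_def dom_tens cod_tens dom_id cod_id)

lemma whisk_unit [simp]: "whisk U f U = f"
  by (simp add: whisk_def mtens_unit_left mtens_unit_right)

lemma whisk_whisk [simp]: "whisk A (whisk A' f B') B = whisk (OT A A') f (OT B' B)"
  by (simp add: whisk_def mtens_assoc tens_id[symmetric])

lemma whisk_Id [simp]: "whisk A (Id X) B = Id (OT A (OT X B))"
  by (simp add: whisk_def tens_id)

lemma tens_Id_eq_whisk [simp]: "H (Id A) f = whisk A f U" "H f (Id B) = whisk U f B"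
  by (simp_all add: whisk_def mtens_unit_right mtens_unit_left)

lemma whisk_eq_tens: "whisk U f D = H f (Id D)" "whisk D f U = H (Id D) f"
  by (simp_all del: tens_Id_eq_whisk add: whisk_def mtens_unit_left mtens_unit_right)

lemma comp_whisk: "Cod g = Dom f \<Longrightarrow> V (whisk A f B) (whisk A g B) = whisk A (V f g) B"
  unfolding whisk_def
  by (simp del: tens_Id_eq_whisk add: interchange[symmetric] dom_id cod_id cod_tens dom_tens)

lemma whisk_comp: "Cod g = Dom f \<Longrightarrow> whisk A (V f g) B = V (whisk A f B) (whisk A g B)"
  by (simp add: comp_whisk)

lemmas smc_simps [simp] = dom_id cod_id dom_tens cod_tens otens_assoc otens_unit_left
  otens_unit_right dom_comp cod_comp comp_assoc idl_def

lemma tens_eq_whisk_comp: "H f g = V (whisk U f (Cod g)) (whisk (Dom f) g U)"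
  unfolding whisk_def using interchange[of "Id (Dom f)" f g "Id (Cod g)"]
  by (simp del: tens_Id_eq_whisk add: comp_id_right comp_id_left mtens_unit_left mtens_unit_right)

lemma tens_eq_whisk_comp': "H f g = V (whisk (Cod f) g U) (whisk U f (Dom g))"
  unfolding whisk_def using interchange[of f "Id (Cod f)" "Id (Dom g)" g]
  by (simp del: tens_Id_eq_whisk add: comp_id_right comp_id_left mtens_unit_left mtens_unit_right)

lemma whisk_commute:
  assumes "Dom f = X" "Cod f = X'" "Dom g = Y" "Cod g = Y'"
  shows "V (whisk A f (OT Y' D)) (whisk (OT A X) g D) = V (whisk (OT A X') g D) (whisk A f (OT Y D))"
proof -
  have "V (whisk A f (OT Y' D)) (whisk (OT A X) g D) = whisk A (V (whisk U f Y') (whisk X g U)) D"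
    using assms by (simp add: whisk_comp)
  also have "\<dots> = whisk A (V (whisk X' g U) (whisk U f Y)) D"
    using assms tens_eq_whisk_comp[of f g] tens_eq_whisk_comp'[of f g] by simp
  also have "\<dots> = V (whisk (OT A X') g D) (whisk A f (OT Y D))"
    using assms by (simp add: whisk_comp)
  finally show ?thesis .
qed

lemma whisk_commute_gap:
  assumes "Dom f = X" "Cod f = X'" "Dom g = Y" "Cod g = Y'"
  shows "V (whisk A f (OT Z (OT Y' D))) (whisk (OT A (OT X Z)) g D) =
    V (whisk (OT A (OT X' Z)) g D) (whisk A f (OT Z (OT Y D)))"
  using whisk_commute[of "whisk U f Z" "OT X Z" "OT X' Z" g Y Y' A D] assms by simp

lemma comp_nested_whisk:
  "Dom f = OT A' (OT (Cod g) B'') \<Longrightarrow>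
    V (whisk A f B) (whisk (OT A A') g (OT B'' B)) = whisk A (V f (whisk A' g B'')) B"
  using comp_whisk[of "whisk A' g B''" f A B] by simp

text \<open>The variants with a trailing composite r let the simplifier rewrite inside a right-nested
  chain of vertical composites without reassociating it by hand.\<close>

lemma comp2_tail:
  "V a b = c \<Longrightarrow> Cod b = Dom a \<Longrightarrow> Cod r = Dom b \<Longrightarrow> V a (V b r) = V c r"
  by (simp add: comp_assoc[symmetric])

lemma comp3_tail:
  "V a (V b c) = d \<Longrightarrow> Cod b = Dom a \<Longrightarrow> Cod c = Dom b \<Longrightarrow> Cod r = Dom c \<Longrightarrow>
    V a (V b (V c r)) = V d r"
  by (simp flip: comp_assoc)

lemma comp_whisk_tail:
  "Cod g = Dom f \<Longrightarrow> Cod r = OT A (OT (Dom g) B) \<Longrightarrow>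
    V (whisk A f B) (V (whisk A g B) r) = V (whisk A (V f g) B) r"
  by (simp add: comp_whisk[symmetric])

lemma comp_nested_whisk_tail:
  "Dom f = OT A' (OT (Cod g) B'') \<Longrightarrow> Cod r = OT A (OT A' (OT (Dom g) (OT B'' B))) \<Longrightarrow>
    V (whisk A f B) (V (whisk (OT A A') g (OT B'' B)) r) = V (whisk A (V f (whisk A' g B'')) B) r"
  using comp_whisk[of "whisk A' g B''" f A B] by (simp flip: comp_assoc)

lemma nested_whisk_comp_tail:
  "Cod f = OT A' (OT (Dom g) B'') \<Longrightarrow> Cod r = Dom (whisk A f B) \<Longrightarrow>
    V (whisk (OT A A') g (OT B'' B)) (V (whisk A f B) r) = V (whisk A (V (whisk A' g B'') f) B) r"
  using comp_whisk[of f "whisk A' g B''" A B] by (simp flip: comp_assoc)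

lemma whisk_commute_gap_tail:
  assumes "Dom f = X" "Cod f = X'" "Dom g = Y" "Cod g = Y'" "Cod r = OT A (OT X (OT Z (OT Y D)))"
  shows "V (whisk A f (OT Z (OT Y' D))) (V (whisk (OT A (OT X Z)) g D) r) =
    V (whisk (OT A (OT X' Z)) g D) (V (whisk A f (OT Z (OT Y D))) r)"
  using whisk_commute_gap[of f X X' g Y Y' A Z D] assms by (simp flip: comp_assoc)

lemma absorb_tens_factors_right:
  assumes "V l (H p q) = l" "V p p = p" "V q q = q" "Dom p = Cod p" "Dom q = Cod q"
    "Dom l = OT (Cod p) (Cod q)"
  shows "V l (whisk U p (Dom q)) = l" "V l (whisk (Dom p) q U) = l"
proof -
  have "V l (whisk U p (Dom q)) = V (V l (H p q)) (H p (Id (Dom q)))"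
    by (simp only: assms(1) whisk_eq_tens)
  also have "\<dots> = V l (H p q)" using assms(2-6) by (simp del: tens_Id_eq_whisk add: comp_tens)
  finally show "V l (whisk U p (Dom q)) = l" using assms(1) by simp
  have "V l (whisk (Dom p) q U) = V (V l (H p q)) (H (Id (Dom p)) q)"
    by (simp only: assms(1) whisk_eq_tens)
  also have "\<dots> = V l (H p q)" using assms(2-6) by (simp del: tens_Id_eq_whisk add: comp_tens)
  finally show "V l (whisk (Dom p) q U) = l" using assms(1) by simp
qed

lemma absorb_tens_factors_left:
  assumes "V (H p q) l = l" "V p p = p" "V q q = q" "Dom p = Cod p" "Dom q = Cod q"
    "Cod l = OT (Dom p) (Dom q)"
  shows "V (whisk U p (Dom q)) l = l" "V (whisk (Dom p) q U) l = l"
proof -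
  have "V (whisk U p (Dom q)) l = V (H p (Id (Dom q))) (V (H p q) l)"
    by (simp only: assms(1) whisk_eq_tens)
  also have "\<dots> = V (H p q) l"
    using assms(2-6) by (simp del: tens_Id_eq_whisk add: comp_tens flip: comp_assoc)
  finally show "V (whisk U p (Dom q)) l = l" using assms(1) by simp
  have "V (whisk (Dom p) q U) l = V (H (Id (Dom p)) q) (V (H p q) l)"
    by (simp only: assms(1) whisk_eq_tens)
  also have "\<dots> = V (H p q) l"
    using assms(2-6) by (simp del: tens_Id_eq_whisk add: comp_tens flip: comp_assoc)
  finally show "V (whisk (Dom p) q U) l = l" using assms(1) by simp
qed

lemma comp_absorb_through:
  assumes "V w x = x" "V w (V l w) = V l w"
    and "Cod x = Dom w" "Cod w = Dom l" "Cod l = Dom w"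
  shows "V w (V l x) = V l x"
proof -
  have lx: "V l x = V (V l w) x"
    using assms(3,4) by (subst assms(1)[symmetric]) simp
  have "V w (V l x) = V (V w (V l w)) x"
    unfolding lx using assms(3-5) by simp
  then show ?thesis using assms(2) lx by simp
qed

section \<open>Crossing a factor past a word\<close>

fun cross :: "(nat \<Rightarrow> 'a) \<Rightarrow> (nat \<Rightarrow> nat \<Rightarrow> 'b) \<Rightarrow> nat \<Rightarrow> nat list \<Rightarrow> 'b" where
  "cross S L x [] = Id (S x)"
| "cross S L x (i # is) = V (whisk (S i) (cross S L x is) U) (whisk U (L i x) (ob (map S is)))"

definition cross_typed :: "(nat \<Rightarrow> 'a) \<Rightarrow> (nat \<Rightarrow> nat \<Rightarrow> 'b) \<Rightarrow> nat \<Rightarrow> nat list \<Rightarrow> bool" where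
  "cross_typed S L x is \<longleftrightarrow>
     (\<forall>i\<in>set is. Dom (L i x) = OT (S x) (S i) \<and> Cod (L i x) = OT (S i) (S x))"

lemma cross_typed_simps [simp]:
  "cross_typed S L x []"
  "cross_typed S L x (i # is) \<longleftrightarrow>
     Dom (L i x) = OT (S x) (S i) \<and> Cod (L i x) = OT (S i) (S x) \<and> cross_typed S L x is"
  "cross_typed S L x (xs @ ys) \<longleftrightarrow> cross_typed S L x xs \<and> cross_typed S L x ys"
  unfolding cross_typed_def by auto

lemma cross_dom_cod [simp]:
  assumes "cross_typed S L x is"
  shows "Dom (cross S L x is) = OT (S x) (ob (map S is))"
    and "Cod (cross S L x is) = OT (ob (map S is)) (S x)"
  using assms by (induct "is") auto

lemma cross_append:
  "cross_typed S L x xs \<Longrightarrow> cross_typed S L x ys \<Longrightarrow>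
    cross S L x (xs @ ys) =
    V (whisk (ob (map S xs)) (cross S L x ys) U) (whisk U (cross S L x xs) (ob (map S ys)))"
  by (induct xs) (simp_all add: whisk_comp)

lemma cross_map_cong:
  "(\<And>i. i \<in> set is \<Longrightarrow> S' (f i) = S i \<and> L' (f i) y = L i x) \<Longrightarrow> S' y = S x \<Longrightarrow>
    cross S' L' y (map f is) = cross S L x is"
proof (induct "is")
  case (Cons a "is")
  have "map (S' \<circ> f) is = map S is" by (rule map_cong) (use Cons in auto)
  then show ?case using Cons by (simp add: \<open>map (S' \<circ> f) is = map S is\<close>)
qed simp

lemma mv_eq_cross:
  "i \<le> m \<Longrightarrow> cross_typed S L m [0..<m] \<Longrightarrow>
    mv S L m i = whisk U (cross S L m [0..<i]) (ob (map S [i..<m]))"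
proof (induct i)
  case (Suc i)
  have "[i..<m] = i # [Suc i..<m]" using Suc.prems by (simp add: upt_conv_Cons)
  moreover have "cross_typed S L m [0..<i]" "cross_typed S L m [i]"
    using Suc.prems by (auto simp: cross_typed_def)
  ultimately show ?case using Suc by (simp add: mvstep_def cross_append whisk_comp)
qed simp

lemma larrow_eq_cross:
  "cross_typed S L m [0..<m] \<Longrightarrow> larrow S M E L m =
    V (whisk (ob (map S [0..<m])) (M m) U)
      (V (whisk U (cross S L m [0..<m]) (S m)) (whisk U (E m) (ob (map S [0..<Suc m]))))"
  by (simp add: larrow_def mv_eq_cross del: upt_Suc)

lemma mv_cong:
  "(\<And>j. j \<le> m \<Longrightarrow> S' j = S j) \<Longrightarrow> (\<And>j. j < m \<Longrightarrow> L' j m = L j m) \<Longrightarrow> i \<le> m \<Longrightarrow>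
    mv S' L' m i = mv S L m i"
proof (induct i)
  case 0
  have "ob (map S' [0..<m]) = ob (map S [0..<m])" using 0 by (auto intro!: ob_map_cong)
  then show ?case using 0 by simp
next
  case (Suc i)
  have "ob (map S' [0..<i]) = ob (map S [0..<i])" "ob (map S' [Suc i..<m]) = ob (map S [Suc i..<m])"
    using Suc.prems by (auto intro!: ob_map_cong)
  then show ?case using Suc by (simp add: mvstep_def)
qed

lemma larrow_cong:
  assumes "\<And>j. j \<le> m \<Longrightarrow> S' j = S j" "\<And>j. j < m \<Longrightarrow> L' j m = L j m"
    and "M' m = M m" "E' m = E m"
  shows "larrow S' M' E' L' m = larrow S M E L m"
proof -
  have "ob (map S' [0..<m]) = ob (map S [0..<m])" using assms by (auto intro!: ob_map_cong)
  then show ?thesis using assms mv_cong[of m S' S L' L m] by (simp add: larrow_def)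
qed

lemma wbar_cong:
  "(\<And>j. j \<le> m \<Longrightarrow> S' j = S j \<and> M' j = M j \<and> E' j = E j) \<Longrightarrow>
    (\<And>i j. i < j \<Longrightarrow> j \<le> m \<Longrightarrow> L' i j = L i j)
      \<Longrightarrow> wbar S' M' E' L' m = wbar S M E L m"
proof (induct m)
  case (Suc m)
  have "larrow S' M' E' L' (Suc m) = larrow S M E L (Suc m)"
    by (rule larrow_cong) (use Suc.prems in auto)
  then show ?case using Suc by simp
qed simp

end

section \<open>Monads and weak distributive laws in whiskered form\<close>

locale wdl_system = smc C for C :: "('o,'m) smcat" +
  fixes n :: nat and S :: "nat \<Rightarrow> 'o" and Sb M E :: "nat \<Rightarrow> 'm" and
    L :: "nat \<Rightarrow> nat \<Rightarrow> 'm"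
  assumes sys: "wdl0 n S Sb M E L"
begin

lemma monad: "i \<le> n \<Longrightarrow> is_monad (S i) (Sb i) (M i) (E i)"
  using sys unfolding wdl0_def by blast

lemma wdl_law:
  "i < j \<Longrightarrow> j \<le> n \<Longrightarrow> is_wdl (S j) (Sb j) (M j) (E j) (S i) (Sb i) (M i) (E i) (L i j)"
  using sys unfolding wdl0_def by blast

lemma yang_baxter: "i < j \<Longrightarrow> j < k \<Longrightarrow> k \<le> n \<Longrightarrow>
        V (H (L i j) (Sb k)) (V (H (Sb j) (L i k)) (H (L j k) (Sb i))) =
        V (H (Sb i) (L j k)) (V (H (L i k) (Sb j)) (H (Sb k) (L i j)))"
  using sys unfolding wdl0_def by blast

lemma typing_simps [simp]:
  "i \<le> n \<Longrightarrow> Dom (M i) = OT (S i) (S i)" "i \<le> n \<Longrightarrow> Cod (M i) = S i"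
  "i \<le> n \<Longrightarrow> Dom (E i) = U" "i \<le> n \<Longrightarrow> Cod (E i) = S i"
  "i \<le> n \<Longrightarrow> Dom (Sb i) = S i" "i \<le> n \<Longrightarrow> Cod (Sb i) = S i"
  "i < j \<Longrightarrow> j \<le> n \<Longrightarrow> Dom (L i j) = OT (S j) (S i)"
  "i < j \<Longrightarrow> j \<le> n \<Longrightarrow> Cod (L i j) = OT (S i) (S j)"
  using monad[of i] wdl_law[of i j] unfolding is_monad_def is_wdl_def hom_def by auto

lemma monad_axioms:
  assumes "i \<le> n"
  shows "V (Sb i) (Sb i) = Sb i" "V (Sb i) (M i) = M i" "V (M i) (H (Sb i) (Sb i)) = M i"
  "V (Sb i) (E i) = E i" "V (M i) (H (M i) (Sb i)) = V (M i) (H (Sb i) (M i))"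
  "V (M i) (H (E i) (Sb i)) = Sb i" "V (M i) (H (Sb i) (E i)) = Sb i"
  using monad[OF assms] unfolding is_monad_def by auto

lemma law_axioms:
  assumes "i < j" "j \<le> n"
  shows "V (H (Sb i) (Sb j)) (L i j) = L i j" "V (L i j) (H (Sb j) (Sb i)) = L i j"
    "V (L i j) (H (M j) (Sb i)) = V (H (Sb i) (M j)) (V (H (L i j) (Sb j)) (H (Sb j) (L i j)))"
    "V (L i j) (H (Sb j) (M i)) = V (H (M i) (Sb j)) (V (H (Sb i) (L i j)) (H (L i j) (Sb i)))"
  using wdl_law[OF assms] unfolding is_wdl_def by auto

lemma law_absorbs_idem:
  assumes "i < j" "j \<le> n"
  shows "V (L i j) (whisk U (Sb j) (S i)) = L i j"
  "V (L i j) (whisk (S j) (Sb i) U) = L i j"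
  "V (whisk U (Sb i) (S j)) (L i j) = L i j"
  "V (whisk (S i) (Sb j) U) (L i j) = L i j"
proof -
  have le: "i \<le> n" using assms by simp
  note ax = law_axioms[OF assms]
  note mx = monad_axioms[OF le] monad_axioms[OF assms(2)]
  show "V (L i j) (whisk U (Sb j) (S i)) = L i j" "V (L i j) (whisk (S j) (Sb i) U) = L i j"
    using absorb_tens_factors_right[of "L i j" "Sb j" "Sb i"] ax mx assms by simp_all
  show "V (whisk U (Sb i) (S j)) (L i j) = L i j" "V (whisk (S i) (Sb j) U) (L i j) = L i j"
    using absorb_tens_factors_left[of "Sb i" "Sb j" "L i j"] ax mx assms by simp_all
qed

lemma monad_laws_whisk:
  assumes "i \<le> n"
  shows "V (M i) (whisk U (Sb i) (S i)) = M i" "V (M i) (whisk (S i) (Sb i) U) = M i"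
  "V (M i) (whisk U (M i) (S i)) = V (M i) (whisk (S i) (M i) U)"
  "V (M i) (whisk U (E i) (S i)) = Sb i" "V (M i) (whisk (S i) (E i) U) = Sb i"
proof -
  note mx = monad_axioms[OF assms]
  show 1: "V (M i) (whisk U (Sb i) (S i)) = M i" and 2: "V (M i) (whisk (S i) (Sb i) U) = M i"
    using absorb_tens_factors_right[of "M i" "Sb i" "Sb i"] mx assms by simp_all
  have "V (M i) (whisk U (M i) (S i)) = V (V (M i) (whisk (S i) (Sb i) U)) (whisk U (M i) (S i))"
    by (simp only: 2)
  also have "\<dots> = V (M i) (H (M i) (Sb i))"
    using tens_eq_whisk_comp'[of "M i" "Sb i"] assms by simp
  also have "\<dots> = V (M i) (H (Sb i) (M i))" by (simp add: mx)
  also have "\<dots> = V (V (M i) (whisk U (Sb i) (S i))) (whisk (S i) (M i) U)"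
    using tens_eq_whisk_comp[of "Sb i" "M i"] assms by simp
  finally show "V (M i) (whisk U (M i) (S i)) = V (M i) (whisk (S i) (M i) U)" by (simp only: 1)
  have "V (M i) (whisk U (E i) (S i)) = V (V (M i) (whisk (S i) (Sb i) U)) (whisk U (E i) (S i))"
    by (simp only: 2)
  also have "\<dots> = V (M i) (H (E i) (Sb i))"
    using tens_eq_whisk_comp'[of "E i" "Sb i"] assms by simp
  finally show "V (M i) (whisk U (E i) (S i)) = Sb i" by (simp add: mx)
  have "V (M i) (whisk (S i) (E i) U) = V (V (M i) (whisk U (Sb i) (S i))) (whisk (S i) (E i) U)"
    by (simp only: 1)
  also have "\<dots> = V (M i) (H (Sb i) (E i))"
    using tens_eq_whisk_comp[of "Sb i" "E i"] assms by simp
  finally show "V (M i) (whisk (S i) (E i) U) = Sb i" by (simp add: mx)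
qed

lemma law_mult_upper:
  assumes "i < j" "j \<le> n"
  shows "V (L i j) (whisk U (M j) (S i)) = V (whisk (S i) (M j) U) (V (whisk U (L i j) (S j))
    (whisk (S j) (L i j) U))"
proof -
  have le: "i \<le> n" using assms by simp
  note ax = law_axioms[OF assms] and al = law_absorbs_idem[OF assms] and ma =
    monad_laws_whisk[OF le] monad_laws_whisk[OF assms(2)] monad_axioms[OF le]
    monad_axioms[OF assms(2)]
  have "V (L i j) (whisk U (M j) (S i)) = V (V (L i j) (whisk (S j) (Sb i) U)) (whisk U (M j) (S i))"
    by (simp only: al)
  also have "\<dots> = V (L i j) (H (M j) (Sb i))"
    using tens_eq_whisk_comp'[of "M j" "Sb i"] assms by simp
  also have "\<dots> = V (H (Sb i) (M j)) (V (H (L i j) (Sb j)) (H (Sb j) (L i j)))"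
    by (simp add: ax)
  also have "\<dots> = V (whisk (S i) (M j) U) (V (whisk U (Sb i) (OT (S j) (S j))) (V
      (whisk (OT (S i) (S j)) (Sb j) U)
     (V (whisk U (L i j) (S j)) (V (whisk U (Sb j) (OT (S i) (S j))) (whisk (S j) (L i j) U)))))"
    using tens_eq_whisk_comp'[of "Sb i" "M j"] tens_eq_whisk_comp'[of "L i j" "Sb j"]
      tens_eq_whisk_comp[of "Sb j" "L i j"] assms by simp
  also have "\<dots> = V (whisk (S i) (M j) U) (V (whisk (OT (S i) (S j)) (Sb j) U) (V
      (whisk U (Sb i) (OT (S j) (S j)))
     (V (whisk U (L i j) (S j)) (V (whisk U (Sb j) (OT (S i) (S j))) (whisk (S j) (L i j) U)))))"
    using assms by (simp add: whisk_commute_gap_tail[where A=U and f="Sb i" and X="S i" and X'="S i"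
      and Z="S j" and g="Sb j" and Y="S j" and Y'="S j" and D=U, simplified])
  also have "\<dots> = V (whisk (S i) (M j) U) (V (whisk U (L i j) (S j)) (whisk (S j) (L i j) U))"
    using assms by (simp add: comp_nested_whisk_tail[where A="S i" and f="M j" and A'="S j"
      and g="Sb j" and B''=U and B=U, simplified]
      nested_whisk_comp_tail[where A=U and A'=U and g="Sb i" and B''="S j" and B="S j"
        and f="L i j", simplified]
      comp_nested_whisk_tail[where A=U and A'=U and g="Sb j" and B''="S i" and B="S j"
        and f="L i j", simplified] ma al)
  finally show ?thesis .
qed

lemma law_mult_lower:
  assumes "i < j" "j \<le> n"
  shows "V (L i j) (whisk (S j) (M i) U) = V (whisk U (M i) (S j)) (V (whisk (S i) (L i j) U)
    (whisk U (L i j) (S i)))"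
proof -
  have le: "i \<le> n" using assms by simp
  note ax = law_axioms[OF assms] and al = law_absorbs_idem[OF assms] and ma =
    monad_laws_whisk[OF le] monad_laws_whisk[OF assms(2)] monad_axioms[OF le]
    monad_axioms[OF assms(2)]
  have "V (L i j) (whisk (S j) (M i) U) = V (V (L i j) (whisk U (Sb j) (S i))) (whisk (S j) (M i) U)"
    by (simp only: al)
  also have "\<dots> = V (L i j) (H (Sb j) (M i))"
    using tens_eq_whisk_comp[of "Sb j" "M i"] assms by simp
  also have "\<dots> = V (H (M i) (Sb j)) (V (H (Sb i) (L i j)) (H (L i j) (Sb i)))"
    by (simp add: ax)
  also have "\<dots> = V (whisk U (M i) (S j)) (V (whisk (OT (S i) (S i)) (Sb j) U) (V
      (whisk U (Sb i) (OT (S i) (S j)))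
     (V (whisk (S i) (L i j) U) (V (whisk (OT (S i) (S j)) (Sb i) U) (whisk U (L i j) (S i))))))"
    using tens_eq_whisk_comp[of "M i" "Sb j"] tens_eq_whisk_comp[of "Sb i" "L i j"]
      tens_eq_whisk_comp'[of "L i j" "Sb i"] assms by simp
  also have "\<dots> = V (whisk U (M i) (S j)) (V (whisk U (Sb i) (OT (S i) (S j))) (V
      (whisk (OT (S i) (S i)) (Sb j) U)
     (V (whisk (S i) (L i j) U) (V (whisk (OT (S i) (S j)) (Sb i) U) (whisk U (L i j) (S i))))))"
    using assms by (simp add: whisk_commute_gap_tail[where A=U and f="Sb i" and X="S i" and X'="S i"
      and Z="S i" and g="Sb j" and Y="S j" and Y'="S j" and D=U, simplified, symmetric])
  also have "\<dots> = V (whisk U (M i) (S j)) (V (whisk (S i) (L i j) U) (whisk U (L i j) (S i)))"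
    using assms by (simp add: comp_nested_whisk_tail[where A=U and f="M i" and A'=U and g="Sb i"
      and B''="S i" and B="S j", simplified]
      nested_whisk_comp_tail[where A="S i" and A'="S i" and g="Sb j" and B''=U and B=U
        and f="L i j", simplified]
      comp_nested_whisk_tail[where A="S i" and A'="S j" and g="Sb i" and B''=U and B=U
        and f="L i j", simplified] ma al)
  finally show ?thesis .
qed

lemma law_mult_both:
  assumes "a < b" "b \<le> n"
  shows "V (whisk (S a) (M b) U) (V (whisk U (L a b) (S b)) (whisk (S b) (M a) (S b))) = 
   V (H (M a) (M b)) (V (whisk (S a) (L a b) (S b)) (whisk U (L a b) (OT (S a) (S b))))"
proof -
  have le: "a \<le> n" using assms by simp
  have "V (whisk (S a) (M b) U) (V (whisk U (L a b) (S b)) (whisk (S b) (M a) (S b))) = 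
     V (whisk (S a) (M b) U) (whisk U (V (L a b) (whisk (S b) (M a) U)) (S b))"
    using assms le by (simp add: comp_nested_whisk[where A=U and f="L a b" and A'="S b" and g="M a"
      and B''=U and B="S b", simplified])
  also have "\<dots> = V (whisk (S a) (M b) U) (V (whisk U (M a) (OT (S b) (S b))) (V
      (whisk (S a) (L a b) (S b)) (whisk U (L a b) (OT (S a) (S b)))))"
    using assms le by (simp add: law_mult_lower whisk_comp)
  also have "\<dots> = V (H (M a) (M b)) (V (whisk (S a) (L a b) (S b))
      (whisk U (L a b) (OT (S a) (S b))))"
    using assms le tens_eq_whisk_comp'[of "M a" "M b"] by simp
  finally show ?thesis .
qed

lemma law_mult_both_whisk_tail:
  assumes "a < b" "b \<le> n" "Cod r = OT P (OT (S b) (OT (S a) (OT (S a) (S b))))"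
  shows "V (whisk P (H (M a) (M b)) U)
      (V (whisk (OT P (S a)) (L a b) (S b)) (V (whisk P (L a b) (OT (S a) (S b))) r)) =
    V (whisk (OT P (S a)) (M b) U)
      (V (whisk P (L a b) (S b)) (V (whisk (OT P (S b)) (M a) (S b)) r))"
proof -
  have "whisk P (V (whisk (S a) (M b) U) (V (whisk U (L a b) (S b)) (whisk (S b) (M a) (S b)))) U =
      whisk P (V (H (M a) (M b)) (V (whisk (S a) (L a b) (S b))
        (whisk U (L a b) (OT (S a) (S b))))) U"
    using law_mult_both[OF assms(1,2)] by simp
  then have "V (whisk P (H (M a) (M b)) U)
      (V (whisk (OT P (S a)) (L a b) (S b)) (whisk P (L a b) (OT (S a) (S b)))) =
    V (whisk (OT P (S a)) (M b) U) (V (whisk P (L a b) (S b)) (whisk (OT P (S b)) (M a) (S b)))"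
    using assms by (simp add: whisk_comp)
  from comp3_tail[OF this] show ?thesis using assms by simp
qed

lemma yang_baxter_whisk:
  assumes "i < j" "j < k" "k \<le> n"
  shows "V (whisk U (L i j) (S k)) (V (whisk (S j) (L i k) U) (whisk U (L j k) (S i))) =
   V (whisk (S i) (L j k) U) (V (whisk U (L i k) (S j)) (whisk (S k) (L i j) U))"
proof -
  have le: "i \<le> n" "j \<le> n" "i < k" using assms by simp_all
  note al = law_absorbs_idem[of i j] law_absorbs_idem[of i k] law_absorbs_idem[of j k]
  have "V (whisk U (L i j) (S k)) (V (whisk (S j) (L i k) U) (whisk U (L j k) (S i))) = 
    V (whisk U (L i j) (S k)) (V (whisk U (Sb j) (OT (S i) (S k))) (V (whisk (OT (S j) (S i)) (Sb k) U) 
     (V (whisk (S j) (L i k) U) (V (whisk (OT (S j) (S k)) (Sb i) U) (whisk U (L j k) (S i))))))"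
    using assms le by (simp add: comp_nested_whisk_tail[where A=U and f="L i j" and A'=U
      and g="Sb j" and B''="S i" and B="S k", simplified]
      nested_whisk_comp_tail[where A="S j" and A'="S i" and g="Sb k" and B''=U and B=U
        and f="L i k", simplified]
      comp_nested_whisk_tail[where A="S j" and f="L i k" and A'="S k" and g="Sb i" and B''=U
        and B=U, simplified] al)
  also have "\<dots> = V (whisk (OT (S i) (S j)) (Sb k) U) (V (whisk U (L i j) (S k)) (V
      (whisk U (Sb j) (OT (S i) (S k)))  
     (V (whisk (S j) (L i k) U) (V (whisk (OT (S j) (S k)) (Sb i) U) (whisk U (L j k) (S i))))))"
    using assms le by (simp add: whisk_commute_gap_tail[where A=U and f="Sb j" and X="S j"
      and X'="S j" and Z="S i" and g="Sb k" and Y="S k" and Y'="S k" and D=U, simplified, symmetric]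
     whisk_commute_gap_tail[where A=U and f="L i j" and X="OT (S j) (S i)" and X'="OT (S i) (S j)"
       and Z=U and g="Sb k" and Y="S k" and Y'="S k" and D=U, simplified, symmetric])
  also have "\<dots> = V (H (L i j) (Sb k)) (V (H (Sb j) (L i k)) (H (L j k) (Sb i)))"
    using tens_eq_whisk_comp'[of "L i j" "Sb k"] tens_eq_whisk_comp[of "Sb j" "L i k"]
      tens_eq_whisk_comp'[of "L j k" "Sb i"] assms le by simp
  also have "\<dots> = V (H (Sb i) (L j k)) (V (H (L i k) (Sb j)) (H (Sb k) (L i j)))"
    using yang_baxter assms by simp
  also have "\<dots> = V (whisk U (Sb i) (OT (S j) (S k))) (V (whisk (S i) (L j k) U) (V
      (whisk (OT (S i) (S k)) (Sb j) U)
     (V (whisk U (L i k) (S j)) (V (whisk U (Sb k) (OT (S i) (S j))) (whisk (S k) (L i j) U)))))"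
    using tens_eq_whisk_comp[of "Sb i" "L j k"] tens_eq_whisk_comp'[of "L i k" "Sb j"]
      tens_eq_whisk_comp[of "Sb k" "L i j"] assms le by simp
  also have "\<dots> = V (whisk (S i) (L j k) U) (V (whisk (OT (S i) (S k)) (Sb j) U) (V
      (whisk U (Sb i) (OT (S k) (S j)))
     (V (whisk U (L i k) (S j)) (V (whisk U (Sb k) (OT (S i) (S j))) (whisk (S k) (L i j) U)))))"
    using assms le by (simp add: whisk_commute_gap_tail[where A=U and f="Sb i" and X="S i"
      and X'="S i" and Z="S k" and g="Sb j" and Y="S j" and Y'="S j" and D=U, simplified]
     whisk_commute_gap_tail[where A=U and f="Sb i" and X="S i" and X'="S i" and Z=U and g="L j k"
       and Y="OT (S k) (S j)" and Y'="OT (S j) (S k)" and D=U, simplified])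
  also have "\<dots> = V (whisk (S i) (L j k) U) (V (whisk U (L i k) (S j)) (whisk (S k) (L i j) U))"
    using assms le by (simp add: comp_nested_whisk_tail[where A="S i" and f="L j k" and A'="S k"
      and g="Sb j" and B''=U and B=U, simplified]
      nested_whisk_comp_tail[where A=U and A'=U and g="Sb i" and B''="S k" and B="S j"
        and f="L i k", simplified]
      comp_nested_whisk_tail[where A=U and f="L i k" and A'=U and g="Sb k" and B''="S i"
        and B="S j", simplified] al)
  finally show ?thesis .
qed

lemma yang_baxter_whisk_right:
  assumes "i < j" "j < k" "k \<le> n"
  shows "V (whisk U (L i j) (OT (S k) X)) (V (whisk (S j) (L i k) X) (whisk U (L j k) (OT (S i) X))) =
    V (whisk (S i) (L j k) X) (V (whisk U (L i k) (OT (S j) X)) (whisk (S k) (L i j) X))"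
proof -
  have "whisk U (V (whisk U (L i j) (S k)) (V (whisk (S j) (L i k) U) (whisk U (L j k) (S i)))) X =
      whisk U (V (whisk (S i) (L j k) U) (V (whisk U (L i k) (S j)) (whisk (S k) (L i j) U))) X"
    using yang_baxter_whisk[OF assms] by simp
  then show ?thesis using assms by (simp add: whisk_comp)
qed

lemma yang_baxter_whisk_tail:
  assumes "a < b" "b < c" "c \<le> n" "Cod r = OT (S c) (OT (S b) (OT (S a) B))"
  shows "V (whisk (S a) (L b c) B) (V (whisk U (L a c) (OT (S b) B)) (V (whisk (S c) (L a b) B) r)) =
    V (whisk U (L a b) (OT (S c) B)) (V (whisk (S b) (L a c) B) (V (whisk U (L b c) (OT (S a) B)) r))"
  using comp3_tail[OF yang_baxter_whisk_right[OF assms(1-3), symmetric]] assms by simp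

lemma mult_assoc_whisk:
  assumes "i \<le> n" "Cod r = OT A (OT (S i) (OT (S i) (OT (S i) B)))"
  shows "V (whisk A (M i) B) (V (whisk (OT A (S i)) (M i) B) r) = V (whisk A (M i) B) (V
    (whisk A (M i) (OT (S i) B)) r)"
  using assms monad_laws_whisk[OF assms(1)]
  by (simp add: comp_nested_whisk_tail[where A=A and f="M i" and A'="S i" and g="M i" and B''=U
    and B=B, simplified]
      comp_nested_whisk_tail[where A=A and f="M i" and A'=U and g="M i" and B''="S i"
        and B=B, simplified])

lemma cross_typed_L: "m \<le> n \<Longrightarrow> set is \<subseteq> {..<m} \<Longrightarrow> cross_typed S L m is"
  unfolding cross_typed_def by auto

lemma larrow_typing:
  assumes "m \<le> n"
  shows "Dom (larrow S M E L m) = ob (map S [0..<Suc m])"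
    and "Cod (larrow S M E L m) = ob (map S [0..<Suc m])"
proof -
  have typed: "cross_typed S L m [0..<m]" using assms by (auto intro!: cross_typed_L)
  show "Dom (larrow S M E L m) = ob (map S [0..<Suc m])"
    and "Cod (larrow S M E L m) = ob (map S [0..<Suc m])"
    unfolding larrow_eq_cross[OF typed] using typed assms by simp_all
qed

lemma wbar_typing:
  "m \<le> n \<Longrightarrow>
    Dom (wbar S M E L m) = ob (map S [0..<Suc m]) \<and> Cod (wbar S M E L m) = ob (map S [0..<Suc m])"
  by (induct m) (auto simp: larrow_typing simp del: upt_Suc, simp_all add: larrow_typing)

section \<open>The idempotents of the weak distributive laws\<close>

abbreviation lbar where "lbar a b \<equiv> wu S M E L a b"

lemma lbar_eq:
  "lbar a b = V (whisk (S a) (M b) U) (V (whisk U (L a b) (S b)) (whisk U (E b) (OT (S a) (S b))))"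
  by (simp add: wu_def)

lemma lbar_typing [simp]:
  "a < b \<Longrightarrow> b \<le> n \<Longrightarrow> Dom (lbar a b) = OT (S a) (S b)"
  "a < b \<Longrightarrow> b \<le> n \<Longrightarrow> Cod (lbar a b) = OT (S a) (S b)"
  by (simp_all add: lbar_eq)

lemma lbar_absorbs_law:
  assumes "a < b" "b \<le> n"
  shows "V (lbar a b) (L a b) = L a b"
proof -
  have "V (lbar a b) (L a b) = V (whisk (S a) (M b) U) (V (whisk U (L a b) (S b)) (V
      (whisk (S b) (L a b) U) (whisk U (E b) (OT (S b) (S a)))))"
    using assms by (simp add: lbar_eq whisk_commute[where A=U and f="E b" and X=U and X'="S b"
      and g="L a b" and Y="OT (S b) (S a)" and Y'="OT (S a) (S b)" and D=U, simplified])
  also have "\<dots> = V (L a b) (V (whisk U (M b) (S a)) (whisk U (E b) (OT (S b) (S a))))"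
    using assms by (simp add: comp3_tail[OF law_mult_upper[OF assms, symmetric]])
  also have "\<dots> = L a b" using assms monad_laws_whisk[OF assms(2)] law_absorbs_idem[OF assms]
    by (simp add: comp_nested_whisk[where A=U and f="M b" and A'=U and g="E b" and B''="S b"
      and B="S a", simplified])
  finally show ?thesis .
qed

lemma lbar_mult_commute:
  assumes "a < b" "b \<le> n"
  shows "V (lbar a b) (whisk (S a) (M b) U) = V (whisk (S a) (M b) U) (whisk U (lbar a b) (S b))"
proof -
  have le: "a \<le> n" using assms by simp
  have "V (lbar a b) (whisk (S a) (M b) U) = V (whisk (S a) (M b) U) (V (whisk (OT (S a) (S b)) (M b) U)
     (V (whisk U (L a b) (OT (S b) (S b))) (whisk U (E b) (OT (S a) (OT (S b) (S b))))))"
    using assms le by (simp add: lbar_eq whisk_commute_gap[where A=U and f="E b" and X=U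
      and X'="S b" and Z="S a" and g="M b" and Y="OT (S b) (S b)" and Y'="S b" and D=U,
      simplified] whisk_commute_gap_tail[where A=U and f="L a b" and X="OT (S b) (S a)" and
      X'="OT (S a) (S b)" and Z=U and g="M b" and Y="OT (S b) (S b)" and Y'="S b" and D=U,
      simplified])
  also have "\<dots> = V (whisk (S a) (M b) U) (whisk U (lbar a b) (S b))"
    using assms le by (simp add: mult_assoc_whisk lbar_eq whisk_comp)
  finally show ?thesis .
qed

lemma lbar_absorbs_law_mult:
  assumes "a < b" "b \<le> n"
  shows "V (lbar a b) (V (whisk (S a) (M b) U) (whisk U (L a b) (S b)))
    = V (whisk (S a) (M b) U) (whisk U (L a b) (S b))"
proof -
  have le: "a \<le> n" using assms by simp
  have "V (lbar a b) (V (whisk (S a) (M b) U) (whisk U (L a b) (S b)))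
      = V (whisk (S a) (M b) U) (whisk U (V (lbar a b) (L a b)) (S b))"
    using assms le by (simp add: comp2_tail[OF lbar_mult_commute[OF assms]] comp_whisk)
  then show ?thesis using lbar_absorbs_law[OF assms] by simp
qed

text \<open>After expanding the idempotent on the right, Yang-Baxter brings its law to the front,
  where the idempotent on the left absorbs it.\<close>

lemma lbar_absorbs_crossing:
  assumes "a < b" "b < c" "c \<le> n"
  shows "V (whisk U (lbar a b) (S c)) (V (whisk (S a) (L b c) U) (V (whisk U (L a c) (S b))
    (whisk (S c) (lbar a b) U))) =
   V (whisk (S a) (L b c) U) (V (whisk U (L a c) (S b)) (whisk (S c) (lbar a b) U))"
proof -
  have le: "a \<le> n" "b \<le> n" "a < c" using assms by simp_all
  define Q where "Q = V (whisk (S a) (M b) (S c)) (V (whisk (OT (S a) (S b)) (L b c) U) (V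
    (whisk U (L a b) (OT (S c) (S b)))
     (V (whisk (S b) (L a c) (S b)) (V (whisk U (L b c) (OT (S a) (S b)))
       (whisk (S c) (E b) (OT (S a) (S b)))))))"
  have "V (whisk (S a) (L b c) U) (V (whisk U (L a c) (S b)) (whisk (S c) (lbar a b) U)) =
    V (whisk (S a) (L b c) U) (V (whisk (OT (S a) (S c)) (M b) U) (V (whisk U (L a c) (OT (S b) (S b)))
     (V (whisk (S c) (L a b) (S b)) (whisk (S c) (E b) (OT (S a) (S b))))))"
    using assms le by (simp add: lbar_eq whisk_comp whisk_commute_gap_tail[where A=U and f="L a c"
      and X="OT (S c) (S a)" and X'="OT (S a) (S c)" and Z=U and g="M b" and Y="OT (S b) (S b)" and
      Y'="S b" and D=U, simplified])
  also have "\<dots> = V (whisk (S a) (M b) (S c)) (V (whisk (OT (S a) (S b)) (L b c) U) (V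
      (whisk (S a) (L b c) (S b))
     (V (whisk U (L a c) (OT (S b) (S b))) (V (whisk (S c) (L a b) (S b))
       (whisk (S c) (E b) (OT (S a) (S b)))))))"
    using assms le by (simp add: comp_nested_whisk_tail[where A="S a" and f="L b c" and A'="S c"
      and g="M b" and B''=U and B=U, simplified]
      law_mult_lower whisk_comp)
  also have "\<dots> = Q" unfolding Q_def using assms le by (simp add: yang_baxter_whisk_tail)
  finally have crossing_eq: "V (whisk (S a) (L b c) U)
      (V (whisk U (L a c) (S b)) (whisk (S c) (lbar a b) U)) = Q" .
  have lbar_mult_commute_c: "V (whisk U (lbar a b) (S c)) (V (whisk (S a) (M b) (S c)) r)
      = V (whisk (S a) (M b) (S c)) (V (whisk U (lbar a b) (OT (S b) (S c))) r)"
    if "Cod r = OT (S a) (OT (S b) (OT (S b) (S c)))" for r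
  proof -
    have "whisk U (V (lbar a b) (whisk (S a) (M b) U)) (S c)
        = whisk U (V (whisk (S a) (M b) U) (whisk U (lbar a b) (S b))) (S c)"
      using lbar_mult_commute[OF assms(1) le(2)] by simp
    then have "V (whisk U (lbar a b) (S c)) (whisk (S a) (M b) (S c))
        = V (whisk (S a) (M b) (S c)) (whisk U (lbar a b) (OT (S b) (S c)))"
      using assms le by (simp add: whisk_comp)
    note whiskered = this
    show ?thesis using that assms le by (simp add: comp2_tail[OF whiskered])
  qed
  have "V (whisk U (lbar a b) (S c)) Q = Q" unfolding Q_def using assms le
    by (simp add: lbar_mult_commute_c whisk_commute_gap_tail[where A=U and f="lbar a b" and X="OT (S a) (S b)"
      and X'="OT (S a) (S b)" and Z=U and g="L b c" and Y="OT (S c) (S b)" and Y'="OT (S b) (S c)"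
      and D=U, simplified] comp_whisk_tail lbar_absorbs_law)
  then show ?thesis using crossing_eq by simp
qed

lemma lbar_absorbs_crossing_whisk:
  assumes "a < b" "b < c" "c \<le> n" "Cod r = OT P0 (OT (S c) (OT (S a) (OT (S b) P2)))"
  shows
  "V (whisk P0 (lbar a b) (OT (S c) P2)) (V (whisk (OT P0 (S a)) (L b c) P2) (V
    (whisk P0 (L a c) (OT (S b) P2)) (V (whisk (OT P0 (S c)) (lbar a b) P2) r))) =
   V (whisk (OT P0 (S a)) (L b c) P2) (V (whisk P0 (L a c) (OT (S b) P2)) (V
     (whisk (OT P0 (S c)) (lbar a b) P2) r))"
proof -
  have le: "a \<le> n" "b \<le> n" "a < c" using assms by simp_all
  have "whisk P0 (V (whisk U (lbar a b) (S c)) (V (whisk (S a) (L b c) U) (V (whisk U (L a c) (S b))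
      (whisk (S c) (lbar a b) U)))) P2 =
   whisk P0 (V (whisk (S a) (L b c) U) (V (whisk U (L a c) (S b)) (whisk (S c) (lbar a b) U))) P2"
    using lbar_absorbs_crossing[OF assms(1-3)] by simp
  then have "V (whisk P0 (lbar a b) (OT (S c) P2)) (V (whisk (OT P0 (S a)) (L b c) P2) (V
      (whisk P0 (L a c) (OT (S b) P2)) (whisk (OT P0 (S c)) (lbar a b) P2))) =
   V (whisk (OT P0 (S a)) (L b c) P2) (V (whisk P0 (L a c) (OT (S b) P2))
     (whisk (OT P0 (S c)) (lbar a b) P2))"
    using assms le by (simp add: whisk_comp)
  then have "V (V (whisk P0 (lbar a b) (OT (S c) P2)) (V (whisk (OT P0 (S a)) (L b c) P2) (V
      (whisk P0 (L a c) (OT (S b) P2)) (whisk (OT P0 (S c)) (lbar a b) P2)))) r =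
   V (V (whisk (OT P0 (S a)) (L b c) P2) (V (whisk P0 (L a c) (OT (S b) P2))
     (whisk (OT P0 (S c)) (lbar a b) P2))) r" by simp
  then show ?thesis using assms le by simp
qed

abbreviation lbar_in where
  "lbar_in a m \<equiv> whisk (ob (map S [0..<a])) (lbar a (Suc a)) (ob (map S [Suc (Suc a)..<Suc m]))"

lemma lbar_in_Suc: "a < m \<Longrightarrow> lbar_in a (Suc m) = whisk U (lbar_in a m) (S (Suc m))"
  by simp

lemma lbar_in_typing:
  assumes "a < m" "m \<le> n"
  shows "Dom (lbar_in a m) = ob (map S [0..<Suc m])" and "Cod (lbar_in a m) = ob (map S [0..<Suc m])"
proof -
  have "[0..<Suc m] = [0..<a] @ a # Suc a # [Suc (Suc a)..<Suc m]"
    by (rule upt_split2) (use assms in simp)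
  then show "Dom (lbar_in a m) = ob (map S [0..<Suc m])"
    and "Cod (lbar_in a m) = ob (map S [0..<Suc m])"
    using assms by (simp_all del: upt_Suc)
qed

lemma lbar_absorbs_cross:
  assumes "a < j" "Suc j \<le> n"
  shows "V (whisk U (lbar_in a j) (S (Suc j))) 
    (V (cross S L (Suc j) [0..<Suc j]) (whisk (S (Suc j)) (lbar_in a j) U)) =
   V (cross S L (Suc j) [0..<Suc j]) (whisk (S (Suc j)) (lbar_in a j) U)"
proof -
  define P0 where "P0 = ob (map S [0..<a])"
  define P2 where "P2 = ob (map S [Suc (Suc a)..<Suc j])"
  define rO where "rO = [Suc (Suc a)..<Suc j]"
  have sp2: "[0..<Suc j] = [0..<a] @ a # Suc a # rO"
    unfolding rO_def by (rule upt_split2) (use assms in simp)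
  have okO: "cross_typed S L (Suc j) [0..<a]" "cross_typed S L (Suc j) (a # Suc a # rO)"
    using assms by (auto intro!: cross_typed_L simp: rO_def)
  have okO2: "cross_typed S L (Suc j) rO" using okO by simp
  have o3: "ob (map S rO) = P2" unfolding P2_def rO_def ..
  have ty0: "Dom (cross S L (Suc j) [0..<a]) = OT (S (Suc j)) P0"
    "Cod (cross S L (Suc j) [0..<a]) = OT P0 (S (Suc j))"
    using okO unfolding P0_def by simp_all
  have ty2: "Dom (cross S L (Suc j) rO) = OT (S (Suc j)) P2"
    "Cod (cross S L (Suc j) rO) = OT P2 (S (Suc j))"
    using okO2 o3 by simp_all
  have cre: "cross S L (Suc j) [0..<Suc j] = V
      (whisk (OT P0 (OT (S a) (S (Suc a)))) (cross S L (Suc j) rO) U) (V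
      (whisk (OT P0 (S a)) (L (Suc a) (Suc j)) P2)
      (V (whisk P0 (L a (Suc j)) (OT (S (Suc a)) P2))
        (whisk U (cross S L (Suc j) [0..<a]) (OT (S a) (OT (S (Suc a)) P2)))))"
    unfolding sp2 using cross_append[OF okO] assms ty0 ty2 o3 by (simp add: whisk_comp P0_def)
  have "V (whisk P0 (lbar a (Suc a)) (OT P2 (S (Suc j)))) (V (cross S L (Suc j) [0..<Suc j])
      (whisk (OT (S (Suc j)) P0) (lbar a (Suc a)) P2)) =
     V (whisk (OT P0 (OT (S a) (S (Suc a)))) (cross S L (Suc j) rO) U) (V
       (whisk P0 (lbar a (Suc a)) (OT (S (Suc j)) P2)) (V
       (whisk (OT P0 (S a)) (L (Suc a) (Suc j)) P2)
      (V (whisk P0 (L a (Suc j)) (OT (S (Suc a)) P2)) (V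
        (whisk (OT P0 (S (Suc j))) (lbar a (Suc a)) P2) 
      (whisk U (cross S L (Suc j) [0..<a]) (OT (S a) (OT (S (Suc a)) P2)))))))"
    unfolding cre using assms ty0 ty2 
    by (simp add: whisk_commute_gap[where A=U and f="cross S L (Suc j) [0..<a]"
      and X="OT (S (Suc j)) P0" and 
      X'="OT P0 (S (Suc j))" and Z=U and g="lbar a (Suc a)" and Y="OT (S a) (S (Suc a))" and
        Y'="OT (S a) (S (Suc a))"
      and D=P2, simplified]
      whisk_commute_gap_tail[where A=P0 and f="lbar a (Suc a)" and X="OT (S a) (S (Suc a))"
        and X'="OT (S a) (S (Suc a))" and Z=U and g="cross S L (Suc j) rO" and Y="OT (S (Suc j)) P2"
        and Y'="OT P2 (S (Suc j))" and D=U, simplified])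
  also have "\<dots> = V (whisk (OT P0 (OT (S a) (S (Suc a)))) (cross S L (Suc j) rO) U) (V
      (whisk (OT P0 (S a)) (L (Suc a) (Suc j)) P2)
      (V (whisk P0 (L a (Suc j)) (OT (S (Suc a)) P2)) (V
        (whisk (OT P0 (S (Suc j))) (lbar a (Suc a)) P2) 
      (whisk U (cross S L (Suc j) [0..<a]) (OT (S a) (OT (S (Suc a)) P2))))))"
    using assms ty0 ty2 by (simp add: lbar_absorbs_crossing_whisk)
  also have "\<dots> = V (cross S L (Suc j) [0..<Suc j])
      (whisk (OT (S (Suc j)) P0) (lbar a (Suc a)) P2)"
    unfolding cre using assms ty0 ty2 
    by (simp add: whisk_commute_gap[where A=U and f="cross S L (Suc j) [0..<a]"
      and X="OT (S (Suc j)) P0" and 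
      X'="OT P0 (S (Suc j))" and Z=U and g="lbar a (Suc a)" and Y="OT (S a) (S (Suc a))" and
        Y'="OT (S a) (S (Suc a))"
      and D=P2, simplified])
  finally show ?thesis unfolding P0_def P2_def by simp
qed

lemma lbar_larrow_absorb:
  assumes "a < j" "Suc j \<le> n"
  shows "V (lbar_in a (Suc j)) (V (larrow S M E L (Suc j)) (lbar_in a (Suc j))) =
    V (larrow S M E L (Suc j)) (lbar_in a (Suc j))"
proof -
  define P0 where "P0 = ob (map S [0..<a])"
  define P2 where "P2 = ob (map S [Suc (Suc a)..<Suc j])"
  have sp2: "[0..<Suc j] = [0..<a] @ a # Suc a # [Suc (Suc a)..<Suc j]"
    by (rule upt_split2) (use assms in simp)
  have oL: "ob (map S [0..<Suc j]) = OT P0 (OT (S a) (OT (S (Suc a)) P2))"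
    unfolding P0_def P2_def sp2 by simp
  have oL2: "ob (map S [0..<Suc (Suc j)]) = OT P0 (OT (S a) (OT (S (Suc a)) (OT P2 (S (Suc j)))))"
    using oL by (simp only: upt_Suc_append[of 0 "Suc j"] ob_simps map_append) simp
  have okO: "cross_typed S L (Suc j) [0..<Suc j]" using assms by (auto intro!: cross_typed_L)
  have tyc: "Dom (cross S L (Suc j) [0..<Suc j])
      = OT (S (Suc j)) (OT P0 (OT (S a) (OT (S (Suc a)) P2)))"
     "Cod (cross S L (Suc j) [0..<Suc j]) = OT (OT P0 (OT (S a) (OT (S (Suc a)) P2))) (S (Suc j))"
    using okO oL by simp_all
  define X where "X = V (whisk (OT P0 (OT (S a) (OT (S (Suc a)) P2))) (M (Suc j)) U)
     (V (whisk U (cross S L (Suc j) [0..<Suc j]) (S (Suc j))) (V (whisk (S (Suc j))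
       (whisk P0 (lbar a (Suc a)) P2) (S (Suc j)))
       (whisk U (E (Suc j)) (OT P0 (OT (S a) (OT (S (Suc a)) (OT P2 (S (Suc j)))))))))"
  have larrow_lbar: "V (larrow S M E L (Suc j)) (whisk P0 (lbar a (Suc a)) (OT P2 (S (Suc j)))) = X"
    unfolding larrow_eq_cross[OF okO] X_def oL oL2 using assms tyc
    by (simp add: whisk_commute_gap[where A=U and f="E (Suc j)" and X=U and X'="S (Suc j)" and Z=U
      and g="whisk P0 (lbar a (Suc a)) P2" and Y="OT P0 (OT (S a) (OT (S (Suc a)) P2))" and
      Y'="OT P0 (OT (S a) (OT (S (Suc a)) P2))" and D="S (Suc j)", simplified]
      del: upt_Suc)
  have absorbs_cross: "V (whisk U (whisk P0 (lbar a (Suc a)) P2) (S (Suc j))) 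
    (V (cross S L (Suc j) [0..<Suc j]) (whisk (S (Suc j)) (whisk P0 (lbar a (Suc a)) P2) U)) =
   V (cross S L (Suc j) [0..<Suc j]) (whisk (S (Suc j)) (whisk P0 (lbar a (Suc a)) P2) U)"
    using lbar_absorbs_cross[OF assms] unfolding P0_def P2_def .
  have "whisk U (V (whisk U (whisk P0 (lbar a (Suc a)) P2) (S (Suc j))) 
    (V (cross S L (Suc j) [0..<Suc j]) (whisk (S (Suc j))
      (whisk P0 (lbar a (Suc a)) P2) U))) (S (Suc j)) =
    whisk U (V (cross S L (Suc j) [0..<Suc j]) (whisk (S (Suc j))
      (whisk P0 (lbar a (Suc a)) P2) U)) (S (Suc j))" using absorbs_cross by simp
  then have absorbs_cross_whisk: "V (whisk P0 (lbar a (Suc a)) (OT P2 (OT (S (Suc j)) (S (Suc j))))) (V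
      (whisk U (cross S L (Suc j) [0..<Suc j]) (S (Suc j)))
     (whisk (OT (S (Suc j)) P0) (lbar a (Suc a)) (OT P2 (S (Suc j))))) = 
     V (whisk U (cross S L (Suc j) [0..<Suc j]) (S (Suc j)))
       (whisk (OT (S (Suc j)) P0) (lbar a (Suc a)) (OT P2 (S (Suc j))))"
    using assms tyc by (simp add: whisk_comp)
  have "V (whisk P0 (lbar a (Suc a)) (OT P2 (S (Suc j)))) X = X"
    unfolding X_def using assms tyc
    by (simp add: whisk_commute_gap_tail[where A=U and f="whisk P0 (lbar a (Suc a)) P2"
      and X="OT P0 (OT (S a) (OT (S (Suc a)) P2))" and X'="OT P0 (OT (S a) (OT (S (Suc a)) P2))" and
      Z=U and g="M (Suc j)" and Y="OT (S (Suc j)) (S (Suc j))" and Y'="S (Suc j)" and D=U,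
      simplified] comp3_tail[OF absorbs_cross_whisk] del: upt_Suc)
  then show ?thesis using larrow_lbar unfolding lbar_in_Suc[OF assms(1)] P0_def P2_def by simp
qed

lemma lbar_absorbs_larrow_top:
  assumes "Suc a \<le> n"
  shows "V (whisk (ob (map S [0..<a])) (lbar a (Suc a)) U) (larrow S M E L (Suc a)) =
    larrow S M E L (Suc a)"
proof -
  define P0 where "P0 = ob (map S [0..<a])"
  have okO: "cross_typed S L (Suc a) [0..<a]" "cross_typed S L (Suc a) [a]"
    using assms by (auto intro!: cross_typed_L)
  have ty0: "Dom (cross S L (Suc a) [0..<a]) = OT (S (Suc a)) P0"
    "Cod (cross S L (Suc a) [0..<a]) = OT P0 (S (Suc a))"
    using okO unfolding P0_def by simp_all
  have cre: "cross S L (Suc a) [0..<Suc a] = V (whisk P0 (L a (Suc a)) U)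
      (whisk U (cross S L (Suc a) [0..<a]) (S a))"
    using cross_append[OF okO] assms unfolding P0_def by simp
  have okA: "cross_typed S L (Suc a) [0..<Suc a]" using assms by (auto intro!: cross_typed_L)
  have absorbs_law_mult: "V (whisk P0 (lbar a (Suc a)) U) (V (whisk (OT P0 (S a)) (M (Suc a)) U)
      (whisk P0 (L a (Suc a)) (S (Suc a)))) =
      V (whisk (OT P0 (S a)) (M (Suc a)) U) (whisk P0 (L a (Suc a)) (S (Suc a)))"
  proof -
    have "whisk P0 (V (lbar a (Suc a)) (V (whisk (S a) (M (Suc a)) U)
        (whisk U (L a (Suc a)) (S (Suc a))))) U =
          whisk P0 (V (whisk (S a) (M (Suc a)) U) (whisk U (L a (Suc a)) (S (Suc a)))) U"
            using lbar_absorbs_law_mult[of a "Suc a"] assms by simp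
    then show ?thesis using assms by (simp add: whisk_comp)
  qed
  show ?thesis unfolding larrow_eq_cross[OF okA] cre using assms ty0
      by (simp add: P0_def[symmetric] comp3_tail[OF absorbs_law_mult] whisk_comp)
qed

lemma lbar_absorbs_wbar:
  "a < m \<Longrightarrow> m \<le> n \<Longrightarrow> V (lbar_in a m) (wbar S M E L m) = wbar S M E L m"
proof (induct m)
  case (Suc m)
  show ?case
  proof (cases "a = m")
    case True
    with Suc lbar_absorbs_larrow_top[of a] show ?thesis
      using wbar_typing[of m] larrow_typing[of "Suc m"] by (simp flip: comp_assoc)
  next
    case False
    then have "a < m" using Suc by simp
    let ?x = "whisk U (wbar S M E L m) (S (Suc m))"
    have "V (lbar_in a (Suc m)) ?x = whisk U (V (lbar_in a m) (wbar S M E L m)) (S (Suc m))"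
      unfolding lbar_in_Suc[OF \<open>a < m\<close>]
      by (rule comp_whisk) (use lbar_in_typing[of a m] wbar_typing[of m] Suc \<open>a < m\<close> in
        simp)
    also have "\<dots> = ?x"
      using Suc \<open>a < m\<close> by simp
    finally have "V (lbar_in a (Suc m)) (V (larrow S M E L (Suc m)) ?x) = V (larrow S M E L (Suc m)) ?x"
      by (rule comp_absorb_through[OF _ lbar_larrow_absorb[OF \<open>a < m\<close> \<open>Suc m \<le> n\<close>]])
        (use lbar_in_typing[of a "Suc m"] wbar_typing[of m] larrow_typing[of "Suc m"] Suc.prems
            ob_map_upt_Suc[of S "Suc m"]
          in \<open>simp_all del: upt_Suc\<close>)
    then show ?thesis by simp
  qed
qed simp

lemma wbar_1: "Suc 0 \<le> n \<Longrightarrow> wbar S M E L (Suc 0) = lbar 0 (Suc 0)"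
  using larrow_typing[of "Suc 0"] by (simp add: larrow_eq_cross cross_typed_L lbar_eq)

section \<open>The image under the 2-functor merging two monads\<close>

abbreviation "CSa a \<equiv> CS (Suc a) S"
abbreviation "CLa a \<equiv> CL (Suc a) S M E L"
abbreviation "CMa a \<equiv> CM (Suc a) S M L"
abbreviation "CEa a \<equiv> CE (Suc a) E L"
abbreviation "larrowC a \<equiv> larrow (CSa a) (CMa a) (CEa a) (CLa a)"
abbreviation "wbarC a \<equiv> wbar (CSa a) (CMa a) (CEa a) (CLa a)"

lemma CL_typing:
  assumes "i < j" "Suc j \<le> n"
  shows "Dom (CLa a i j) = OT (CSa a j) (CSa a i) \<and> Cod (CLa a i j) = OT (CSa a i) (CSa a j)"
  using assms by (auto simp: CL_def CS_def lbar_eq)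

lemma cross_typed_CL:
  "Suc j \<le> n \<Longrightarrow> set is \<subseteq> {..<j} \<Longrightarrow> cross_typed (CSa a) (CLa a) j is"
  unfolding cross_typed_def using CL_typing by auto

lemma ob_CS_below: "j \<le> a \<Longrightarrow> ob (map (CSa a) [0..<j]) = ob (map S [0..<j])"
  by (rule ob_map_cong) (auto simp: CS_def)

lemma ob_CS_above: "ob (map (CSa a) [Suc a..<j]) = ob (map S [Suc (Suc a)..<Suc j])"
proof -
  have "ob (map (CSa a) [Suc a..<j]) = ob (map (S \<circ> Suc) [Suc a..<j])"
    by (rule ob_map_cong) (auto simp: CS_def)
  also have "\<dots> = ob (map S [Suc (Suc a)..<Suc j])"
    by (simp only: map_map[symmetric] map_Suc_upt)
  finally show ?thesis .
qed

lemma ob_CS_prefix: "a < j \<Longrightarrow> ob (map (CSa a) [0..<j]) = ob (map S [0..<Suc j])"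
proof -
  assume "a < j"
  then have "[0..<j] = [0..<a] @ a # [Suc a..<j]"
    and "[0..<Suc j] = [0..<a] @ a # Suc a # [Suc (Suc a)..<Suc j]"
    using upt_split1[of a j] upt_split2[of a "Suc j"] by simp_all
  then show ?thesis using ob_CS_below[of a a] ob_CS_above[of a j] by (simp add: CS_def)
qed

lemma cross_CL_above:
  assumes "a < j" "Suc j \<le> n"
  shows "cross (CSa a) (CLa a) j [0..<j] = V (cross S L (Suc j) [0..<Suc j]) 
     (whisk (S (Suc j)) (lbar_in a j) U)"
proof -
  define P0 where "P0 = ob (map S [0..<a])"
  define P2 where "P2 = ob (map S [Suc (Suc a)..<Suc j])"
  define rC where "rC = [Suc a..<j]"
  define rO where "rO = [Suc (Suc a)..<Suc j]"
  have sp1: "[0..<j] = [0..<a] @ a # rC" unfolding rC_def by (rule upt_split1) (use assms in simp)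
  have sp2: "[0..<Suc j] = [0..<a] @ a # Suc a # rO"
    unfolding rO_def by (rule upt_split2) (use assms in simp)
  have okC1: "cross_typed (CSa a) (CLa a) j [0..<a]"
    by (rule cross_typed_CL) (use assms in \<open>auto simp: rC_def\<close>)
  have okC2: "cross_typed (CSa a) (CLa a) j (a # rC)"
    by (rule cross_typed_CL) (use assms in \<open>auto simp: rC_def\<close>)
  note okC = okC1 okC2
  have okO: "cross_typed S L (Suc j) [0..<a]" "cross_typed S L (Suc j) (a # Suc a # rO)"
    using assms by (auto intro!: cross_typed_L simp: rO_def)
  have okO2: "cross_typed S L (Suc j) rO" using okO by simp
  have c1: "cross (CSa a) (CLa a) j [0..<a] = cross S L (Suc j) [0..<a]"
    using cross_map_cong[of "[0..<a]" "CSa a" id S "CLa a" j L "Suc j"] assms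
      by (simp add: CS_def CL_def)
  have c2: "cross (CSa a) (CLa a) j rC = cross S L (Suc j) rO"
    using cross_map_cong[of rC S Suc "CSa a" L "Suc j" "CLa a" j] assms 
    by (simp add: CS_def CL_def rC_def rO_def map_Suc_upt)
  have c3: "CLa a a j = V (whisk (S a) (L (Suc a) (Suc j)) U) (V (whisk U (L a (Suc j)) (S (Suc a)))
      (whisk (S (Suc j)) (lbar a (Suc a)) U))"
    using assms by (simp add: CL_def)
  have o1: "ob (map (CSa a) [0..<a]) = P0" unfolding P0_def by (simp add: ob_CS_below)
  have o2: "ob (map (CSa a) rC) = P2" unfolding P2_def rC_def by (simp add: ob_CS_above)
  have o3: "ob (map S rO) = P2" unfolding P2_def rO_def ..
  have ty0: "Dom (cross S L (Suc j) [0..<a]) = OT (S (Suc j)) P0"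
    "Cod (cross S L (Suc j) [0..<a]) = OT P0 (S (Suc j))"
    using okO unfolding P0_def by simp_all
  have ty2: "Dom (cross S L (Suc j) rO) = OT (S (Suc j)) P2"
    "Cod (cross S L (Suc j) rO) = OT P2 (S (Suc j))"
    using okO2 o3 by simp_all
  have "cross (CSa a) (CLa a) j [0..<j] = V (whisk P0 (cross (CSa a) (CLa a) j (a # rC)) U)
      (whisk U (cross (CSa a) (CLa a) j [0..<a]) (ob (map (CSa a) (a # rC))))"
    unfolding sp1 using cross_append[OF okC] o1 by simp
  also have "\<dots> = V (whisk (OT P0 (OT (S a) (S (Suc a)))) (cross S L (Suc j) rO) U) (V
      (whisk (OT P0 (S a)) (L (Suc a) (Suc j)) P2)
      (V (whisk P0 (L a (Suc j)) (OT (S (Suc a)) P2)) (V (whisk (OT P0 (S (Suc j))) (lbar a (Suc a)) P2)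
       (whisk U (cross S L (Suc j) [0..<a]) (OT (S a) (OT (S (Suc a)) P2))))))"
    using assms ty0 ty2 by (simp add: c1 c2 c3 o2 whisk_comp CS_def)
  also have "\<dots> = V (whisk (OT P0 (OT (S a) (S (Suc a)))) (cross S L (Suc j) rO) U) (V
      (whisk (OT P0 (S a)) (L (Suc a) (Suc j)) P2)
      (V (whisk P0 (L a (Suc j)) (OT (S (Suc a)) P2)) (V
        (whisk U (cross S L (Suc j) [0..<a]) (OT (S a) (OT (S (Suc a)) P2)))
       (whisk (OT (S (Suc j)) P0) (lbar a (Suc a)) P2))))"
    using assms ty0 by (simp add: whisk_commute_gap[where A=U and f="cross S L (Suc j) [0..<a]"
      and X="OT (S (Suc j)) P0" and 
      X'="OT P0 (S (Suc j))" and Z=U and g="lbar a (Suc a)" and Y="OT (S a) (S (Suc a))" and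
        Y'="OT (S a) (S (Suc a))"
      and D=P2, simplified, symmetric])
  also have "\<dots> = V (cross S L (Suc j) [0..<Suc j]) (whisk (S (Suc j))
      (whisk P0 (lbar a (Suc a)) P2) U)"
    unfolding sp2 using cross_append[OF okO] assms ty0 ty2 o3 by (simp add: whisk_comp P0_def)
  finally show ?thesis unfolding P0_def P2_def .
qed

lemma larrow_CL_above:
  assumes "a < j" "Suc j \<le> n"
  shows "larrowC a j = V (larrow S M E L (Suc j)) (lbar_in a (Suc j))"
proof -
  define P0 where "P0 = ob (map S [0..<a])"
  define P2 where "P2 = ob (map S [Suc (Suc a)..<Suc j])"
  have sp2: "[0..<Suc j] = [0..<a] @ a # Suc a # [Suc (Suc a)..<Suc j]"
    by (rule upt_split2) (use assms in simp)
  have oL: "ob (map S [0..<Suc j]) = OT P0 (OT (S a) (OT (S (Suc a)) P2))"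
    unfolding P0_def P2_def sp2 by simp
  have oL2: "ob (map S [0..<Suc (Suc j)]) = OT P0 (OT (S a) (OT (S (Suc a)) (OT P2 (S (Suc j)))))"
    using oL by (simp only: upt_Suc_append[of 0 "Suc j"] ob_simps map_append) simp
  have okC: "cross_typed (CSa a) (CLa a) j [0..<j]" using assms by (auto intro!: cross_typed_CL)
  have okO: "cross_typed S L (Suc j) [0..<Suc j]" using assms by (auto intro!: cross_typed_L)
  have tyc: "Dom (cross S L (Suc j) [0..<Suc j])
      = OT (S (Suc j)) (OT P0 (OT (S a) (OT (S (Suc a)) P2)))"
     "Cod (cross S L (Suc j) [0..<Suc j]) = OT (OT P0 (OT (S a) (OT (S (Suc a)) P2))) (S (Suc j))"
    using okO oL by simp_all
  have "larrowC a j = V (whisk (ob (map S [0..<Suc j])) (M (Suc j)) U)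
     (V (whisk U (cross S L (Suc j) [0..<Suc j]) (S (Suc j))) (V (whisk (S (Suc j))
       (whisk P0 (lbar a (Suc a)) P2) (S (Suc j)))
       (whisk U (E (Suc j)) (ob (map S [0..<Suc (Suc j)])))))"
    using assms tyc oL oL2 unfolding larrow_eq_cross[OF okC]
    by (simp add: cross_CL_above ob_CS_prefix CS_def CM_def CE_def whisk_comp P0_def P2_def del:
      upt_Suc)
  also have "\<dots> = V (whisk (ob (map S [0..<Suc j])) (M (Suc j)) U)
     (V (whisk U (cross S L (Suc j) [0..<Suc j]) (S (Suc j))) (V
       (whisk U (E (Suc j)) (ob (map S [0..<Suc (Suc j)])))
       (whisk P0 (lbar a (Suc a)) (OT P2 (S (Suc j))))))"
    using assms tyc unfolding oL2 oL 
    by (simp add: whisk_commute_gap[where A=U and f="E (Suc j)" and X=U and X'="S (Suc j)" and Z=U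
      and g="whisk P0 (lbar a (Suc a)) P2" and Y="OT P0 (OT (S a) (OT (S (Suc a)) P2))" and
      Y'="OT P0 (OT (S a) (OT (S (Suc a)) P2))" and D="S (Suc j)", simplified, symmetric]
      del: upt_Suc)
  also have "\<dots> = V (larrow S M E L (Suc j)) (whisk P0 (lbar a (Suc a)) (OT P2 (S (Suc j))))"
    unfolding larrow_eq_cross[OF okO] using assms tyc oL oL2 by (simp del: upt_Suc)
  finally show ?thesis unfolding lbar_in_Suc[OF assms(1)] P0_def P2_def by simp
qed

lemma cross_CL_merged: "Suc a \<le> n \<Longrightarrow> set is \<subseteq> {..<a} \<Longrightarrow> 
  V (cross (CSa a) (CLa a) a is) (whisk U (L a (Suc a)) (ob (map S is))) = 
  V (whisk (ob (map S is)) (L a (Suc a)) U) (V (whisk U (cross S L (Suc a) is) (S a))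
    (whisk (S (Suc a)) (cross S L a is) U))"
proof (induct "is")
  case Nil then show ?case by (simp add: CS_def)
next
  case (Cons i "is")
  have ia: "i < a" "Suc a \<le> n" "set is \<subseteq> {..<a}" using Cons by auto
  have IH: "V (cross (CSa a) (CLa a) a is) (whisk U (L a (Suc a)) (ob (map S is))) = 
    V (whisk (ob (map S is)) (L a (Suc a)) U) (V (whisk U (cross S L (Suc a) is) (S a))
      (whisk (S (Suc a)) (cross S L a is) U))"
    using Cons by simp
  have obc: "ob (map (CSa a) is) = ob (map S is)"
    by (rule ob_map_cong) (use ia in \<open>auto simp: CS_def\<close>)
  have okb: "cross_typed S L (Suc a) is" "cross_typed S L a is"
    using ia by (auto intro!: cross_typed_L)
  have okc: "cross_typed (CSa a) (CLa a) a is" using ia by (auto intro!: cross_typed_CL)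
  have tyc: "Dom (cross (CSa a) (CLa a) a is) = OT (OT (S a) (S (Suc a))) (ob (map S is))"
     "Cod (cross (CSa a) (CLa a) a is) = OT (ob (map S is)) (OT (S a) (S (Suc a)))"
    using okc obc by (simp_all add: CS_def)
  have cl: "CLa a i a = V (whisk U (L i a) (S (Suc a))) (V (whisk (S a) (L i (Suc a)) U)
      (whisk U (lbar a (Suc a)) (S i)))"
    using ia by (simp add: CL_def)
  have IHw: "V (whisk (S i) (cross (CSa a) (CLa a) a is) U) (V
      (whisk (S i) (L a (Suc a)) (ob (map S is))) r) = 
    V (whisk (OT (S i) (ob (map S is))) (L a (Suc a)) U) (V
      (whisk (S i) (cross S L (Suc a) is) (S a)) (V
      (whisk (OT (S i) (S (Suc a))) (cross S L a is) U) r))"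
    if "Cod r = OT (S i) (OT (S (Suc a)) (OT (S a) (ob (map S is))))" for r
  proof -
    have "whisk (S i) (V (cross (CSa a) (CLa a) a is) (whisk U (L a (Suc a)) (ob (map S is)))) U = 
      whisk (S i) (V (whisk (ob (map S is)) (L a (Suc a)) U) (V
        (whisk U (cross S L (Suc a) is) (S a)) (whisk (S (Suc a)) (cross S L a is) U))) U"
      using IH by simp
    then have "V (whisk (S i) (cross (CSa a) (CLa a) a is) U)
        (whisk (S i) (L a (Suc a)) (ob (map S is))) = 
    V (whisk (OT (S i) (ob (map S is))) (L a (Suc a)) U) (V
      (whisk (S i) (cross S L (Suc a) is) (S a)) (whisk (OT (S i) (S (Suc a))) (cross S L a is) U))"
      using ia tyc okb by (simp add: whisk_comp)
    note whiskered = this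
    show ?thesis using that ia tyc okb by (simp add: comp2_tail[OF whiskered])
  qed
  have "V (cross (CSa a) (CLa a) a (i # is)) (whisk U (L a (Suc a)) (ob (map S (i # is)))) =
    V (whisk (S i) (cross (CSa a) (CLa a) a is) U) (V
      (whisk U (L i a) (OT (S (Suc a)) (ob (map S is)))) (V
      (whisk (S a) (L i (Suc a)) (ob (map S is)))
       (V (whisk U (lbar a (Suc a)) (OT (S i) (ob (map S is))))
         (whisk U (L a (Suc a)) (OT (S i) (ob (map S is)))))))"
    using ia tyc by (simp add: obc cl CS_def whisk_comp)
  also have "\<dots> = V (whisk (S i) (cross (CSa a) (CLa a) a is) U) (V
      (whisk (S i) (L a (Suc a)) (ob (map S is))) (V
      (whisk U (L i (Suc a)) (OT (S a) (ob (map S is))))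
       (whisk (S (Suc a)) (L i a) (ob (map S is)))))"
    using ia tyc by (simp add: comp_whisk_tail comp_whisk lbar_absorbs_law yang_baxter_whisk_right)
  also have "\<dots> = V (whisk (ob (map S (i # is))) (L a (Suc a)) U) (V
      (whisk U (cross S L (Suc a) (i # is)) (S a)) (whisk (S (Suc a)) (cross S L a (i # is)) U))"
    using ia tyc okb by (simp add: IHw whisk_comp whisk_commute_gap_tail[where A=U
      and f="L i (Suc a)" and X="OT (S (Suc a)) (S i)" and X'="OT (S i) (S (Suc a))" and Z=U and
      g="cross S L a is" and Y="OT (S a) (ob (map S is))" and Y'="OT (ob (map S is)) (S a)" and D=U,
      simplified])
  finally show ?case .
qed

lemma cross_CL_merged_tail:
  assumes "Suc a \<le> n"
    and "Cod r = OT (S (Suc a)) (OT (S a) (OT (ob (map S [0..<a])) (OT (S a) (S (Suc a)))))"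
  shows "V (whisk U (cross (CSa a) (CLa a) a [0..<a]) (OT (S a) (S (Suc a))))
      (V (whisk U (L a (Suc a)) (OT (ob (map S [0..<a])) (OT (S a) (S (Suc a))))) r) =
    V (whisk (ob (map S [0..<a])) (L a (Suc a)) (OT (S a) (S (Suc a))))
      (V (whisk U (cross S L (Suc a) [0..<a]) (OT (S a) (OT (S a) (S (Suc a)))))
        (V (whisk (S (Suc a)) (cross S L a [0..<a]) (OT (S a) (S (Suc a)))) r))"
proof -
  have typed: "cross_typed S L a [0..<a]" "cross_typed S L (Suc a) [0..<a]"
    "cross_typed (CSa a) (CLa a) a [0..<a]"
    using assms by (auto intro!: cross_typed_L cross_typed_CL)
  have "whisk U (V (cross (CSa a) (CLa a) a [0..<a]) (whisk U (L a (Suc a)) (ob (map S [0..<a]))))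
      (OT (S a) (S (Suc a))) =
    whisk U (V (whisk (ob (map S [0..<a])) (L a (Suc a)) U)
      (V (whisk U (cross S L (Suc a) [0..<a]) (S a)) (whisk (S (Suc a)) (cross S L a [0..<a]) U)))
      (OT (S a) (S (Suc a)))"
    using cross_CL_merged[of a "[0..<a]", OF assms(1)] by (simp add: subset_eq)
  then have "V (whisk U (cross (CSa a) (CLa a) a [0..<a]) (OT (S a) (S (Suc a))))
      (whisk U (L a (Suc a)) (OT (ob (map S [0..<a])) (OT (S a) (S (Suc a))))) =
    V (whisk (ob (map S [0..<a])) (L a (Suc a)) (OT (S a) (S (Suc a))))
      (V (whisk U (cross S L (Suc a) [0..<a]) (OT (S a) (OT (S a) (S (Suc a)))))
        (whisk (S (Suc a)) (cross S L a [0..<a]) (OT (S a) (S (Suc a)))))"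
    using assms typed by (simp add: whisk_comp ob_CS_below CS_def)
  from comp2_tail[OF this] show ?thesis using assms typed by (simp add: ob_CS_below CS_def)
qed

lemma larrow_CL_merged:
  assumes "Suc a \<le> n"
  shows "larrowC a a = V (larrow S M E L (Suc a))
    (whisk U (larrow S M E L a) (S (Suc a)))"
proof -
  define P0 where "P0 = ob (map S [0..<a])"
  have le: "a \<le> n" "a < Suc a" using assms by simp_all
  have okC: "cross_typed (CSa a) (CLa a) a [0..<a]" using assms by (auto intro!: cross_typed_CL)
  have oka: "cross_typed S L a [0..<a]" "cross_typed S L (Suc a) [0..<a]" "cross_typed S L (Suc a) [a]" "cross_typed S L (Suc a) [0..<Suc a]"
    using assms by (auto intro!: cross_typed_L)
  have tya: "Dom (cross S L a [0..<a]) = OT (S a) P0" "Cod (cross S L a [0..<a]) = OT P0 (S a)"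
    "Dom (cross S L (Suc a) [0..<a]) = OT (S (Suc a)) P0"
    "Cod (cross S L (Suc a) [0..<a]) = OT P0 (S (Suc a))"
    using oka unfolding P0_def by simp_all
  have o1: "ob (map (CSa a) [0..<a]) = P0" unfolding P0_def by (simp add: ob_CS_below)
  have tyC: "Dom (cross (CSa a) (CLa a) a [0..<a]) = OT (OT (S a) (S (Suc a))) P0"
     "Cod (cross (CSa a) (CLa a) a [0..<a]) = OT P0 (OT (S a) (S (Suc a)))"
    using okC o1 by (simp_all add: CS_def)
  have crMw: "V (whisk U (cross (CSa a) (CLa a) a [0..<a]) (OT (S a) (S (Suc a))))
      (V (whisk U (L a (Suc a)) (OT P0 (OT (S a) (S (Suc a))))) r) =
    V (whisk P0 (L a (Suc a)) (OT (S a) (S (Suc a))))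
      (V (whisk U (cross S L (Suc a) [0..<a]) (OT (S a) (OT (S a) (S (Suc a)))))
        (V (whisk (S (Suc a)) (cross S L a [0..<a]) (OT (S a) (S (Suc a)))) r))"
    if "Cod r = OT (S (Suc a)) (OT (S a) (OT P0 (OT (S a) (S (Suc a)))))" for r
    using cross_CL_merged_tail[OF assms, of r] that unfolding P0_def by simp
  define X where "X = V (whisk (OT P0 (S a)) (M (Suc a)) U) (V (whisk P0 (L a (Suc a)) (S (Suc a)))
    (V (whisk (OT P0 (S (Suc a))) (M a) (S (Suc a)))
     (V (whisk U (cross S L (Suc a) [0..<a]) (OT (S a) (OT (S a) (S (Suc a))))) (V
       (whisk (S (Suc a)) (cross S L a [0..<a]) (OT (S a) (S (Suc a))))
      (V (whisk U (E (Suc a)) (OT (S a) (OT P0 (OT (S a) (S (Suc a))))))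
        (whisk U (E a) (OT P0 (OT (S a) (S (Suc a))))))))))"
  have lhs: "larrowC a a = X"
    unfolding larrow_eq_cross[OF okC] X_def using assms le tyC tya
    by (simp add: o1 CS_def CM_def CE_def whisk_comp tens_eq_whisk_comp[of "E (Suc a)" "E a"] crMw
      law_mult_both_whisk_tail)
  have crb: "cross S L (Suc a) [0..<Suc a] = V (whisk P0 (L a (Suc a)) U)
      (whisk U (cross S L (Suc a) [0..<a]) (S a))"
    using cross_append[OF oka(2,3)] assms unfolding P0_def by simp
  have rhs: "V (larrow S M E L (Suc a)) (whisk U (larrow S M E L a) (S (Suc a))) = X"
    unfolding larrow_eq_cross[OF oka(1)] larrow_eq_cross[OF oka(4)] crb X_def using assms le tya
    by (simp add: P0_def[symmetric] whisk_comp 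
      whisk_commute_gap_tail[where A=U and f="E (Suc a)" and X=U and X'="S (Suc a)" and Z=P0
        and g="M a" and Y="OT (S a) (S a)" and Y'="S a" and D="S (Suc a)", simplified]
      whisk_commute_gap_tail[where A=U and f="E (Suc a)" and X=U and X'="S (Suc a)" and Z=U
        and g="cross S L a [0..<a]" and Y="OT (S a) P0"
       and Y'="OT P0 (S a)" and D="OT (S a) (S (Suc a))", simplified]
      whisk_commute_gap_tail[where A=U and f="cross S L (Suc a) [0..<a]" and X="OT (S (Suc a)) P0"
        and X'="OT P0 (S (Suc a))" and Z=U and g="M a" 
       and Y="OT (S a) (S a)" and Y'="S a" and D="S (Suc a)", simplified])
  show ?thesis using lhs rhs by simp
qed

lemma wbarC_merged:
  assumes "0 < a" "Suc a \<le> n"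
  shows "wbarC a a = wbar S M E L (Suc a)"
proof -
  obtain p where a: "a = Suc p" using assms(1) by (cases a) auto
  have "wbarC a p = wbar S M E L p"
    by (rule wbar_cong) (auto simp: CS_def CM_def CE_def CL_def a)
  then show ?thesis
    using larrow_CL_merged[OF assms(2)] wbar_typing[of p] larrow_typing[of a]
      larrow_typing[of "Suc a"] assms
    by (simp add: a CS_def whisk_comp)
qed

lemma wbarC_step:
  assumes "a < m" "Suc m \<le> n"
    and "Cod (wbarC a (m - 1)) = ob (map S [0..<Suc m])"
    and "V (lbar_in a m) (wbarC a (m - 1)) = wbar S M E L m"
  shows "wbarC a m = wbar S M E L (Suc m)"
proof -
  obtain p where m: "m = Suc p" using assms(1) by (cases m) auto
  have "V (lbar_in a (Suc m)) (whisk U (wbarC a p) (S (Suc m))) =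
      whisk U (V (lbar_in a m) (wbarC a p)) (S (Suc m))"
    unfolding lbar_in_Suc[OF assms(1)]
    by (rule comp_whisk) (use lbar_in_typing[of a m] assms m in simp)
  then have absorbed: "V (lbar_in a (Suc m)) (whisk U (wbarC a p) (S (Suc m))) =
      whisk U (wbar S M E L m) (S (Suc m))"
    using assms(4) m by simp
  have "wbarC a m = V (V (larrow S M E L (Suc m)) (lbar_in a (Suc m)))
      (whisk U (wbarC a p) (S (Suc m)))"
    using larrow_CL_above[OF assms(1,2)] assms(1) m by (simp add: CS_def)
  also have "\<dots> = V (larrow S M E L (Suc m)) (V (lbar_in a (Suc m))
      (whisk U (wbarC a p) (S (Suc m))))"
    by (rule comp_assoc)
      (use larrow_typing[of "Suc m"] lbar_in_typing[of a "Suc m"] ob_map_upt_Suc[of S "Suc m"] assms m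
        in \<open>simp_all del: upt_Suc\<close>)
  also have "\<dots> = wbar S M E L (Suc m)"
    unfolding absorbed by simp
  finally show ?thesis .
qed

lemma wbarC_eq_wbar:
  "2 \<le> m \<Longrightarrow> m \<le> n \<Longrightarrow> a < m \<Longrightarrow> wbarC a (m - 1) = wbar S M E L m"
proof (induct m rule: less_induct)
  case (less m)
  show ?case
  proof (cases "m = Suc a")
    case True
    then show ?thesis using wbarC_merged less.prems by simp
  next
    case False
    then obtain p where m: "m = Suc p" and "a < p" using less.prems by (cases m) auto
    have "Cod (wbarC a (p - 1)) = ob (map S [0..<Suc p]) \<and>
        V (lbar_in a p) (wbarC a (p - 1)) = wbar S M E L p"
    proof (cases "p = 1")
      case True
      then show ?thesis using \<open>a < p\<close> less.prems wbar_1 by (simp add: m CS_def)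
    next
      case False
      then have "wbarC a (p - 1) = wbar S M E L p" using less m \<open>a < p\<close> by simp
      then show ?thesis using lbar_absorbs_wbar[of a p] wbar_typing[of p] \<open>a < p\<close>
          less.prems m by simp
    qed
    then show ?thesis using wbarC_step[of a p] \<open>a < p\<close> less.prems m by simp
  qed
qed

end

theorem lemma2p7:
  fixes C :: "('o,'m) smcat" and n k :: nat
    and S :: "nat \<Rightarrow> 'o" and Sb M E :: "nat \<Rightarrow> 'm" and L :: "nat \<Rightarrow> nat \<Rightarrow> 'm"
  assumes "smc C"
    and "1 < n"
    and "smc_ops.wdl0 C n S Sb M E L"
    and "1 \<le> k" and "k \<le> n"
  shows "smc_ops.wbar C S M E L n =
         smc_ops.wbar C (smc_ops.CS C k S) (smc_ops.CM C k S M L) (smc_ops.CE C k E L)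
                        (smc_ops.CL C k S M E L) (n - 1)"
proof -
  interpret wdl_system C n S Sb M E L
    using assms(1,3) by (simp add: wdl_system_def wdl_system_axioms_def)
  obtain a where k: "k = Suc a" using assms(4) by (cases k) auto
  show ?thesis
    unfolding k using wbarC_eq_wbar[of n a] assms k by simp
qed

end
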